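(* Let $\mathbb F$ be a field of characteristic $2$, let $S=\{R_0,\dots,R_d\}$ be a quasi-thin scheme on $X$, $x\in X$, $\mathcal T=\mathcal T(x)$, and $E_a^*=E_a^*(x)$. Then the Jacobson radical of $\mathcal T$ equals $$\mathcal J_1=\bigl\langle \{E_a^*JE_b^*: R_a,R_b\in S,\ \max\{k_a,k_b\}=2\}\bigr\rangle_{\mathbb F},$$ where $J$ is the all-ones matrix.
   Context: Let $X$ be a nonempty finite set. A scheme of class $d$ on $X$ is a partition $S=\{R_0,\dots,R_d\}$ of $X\times X$ into nonempty sets such that $R_0=\{(b,b):b\in X\}$; for each $c$ there is $c'$ with $R_{c'}=\{(f,e):(e,f)\in R_c\}$; and for all $i,j,k$ the intersection number $p_{ij}^k=|\{\ell\in X:(m,\ell)\in R_i,(\ell,n)\in R_j\}|$ does not depend on $(m,n)\in R_k$. The valency of $R_a$ is $k_a=p_{aa'}^0$; $S$ is quasi-thin if all $k_a\le 2$. For $y\in X$, $yR_a=\{z:(y,z)\in R_a\}$. $A_a\in M_X(\mathbb F)$ is the $(0,1)$ adjacency matrix of $R_a$ and $E_a^*(y)$ is the diagonal $(0,1)$-matrix with ones exactly at positions indexed by $yR_a$. The Terwilliger $\mathbb F$-algebra $\mathcal T(y)$ is the $\mathbb F$-subalgebra of $M_X(\mathbb F)$ generated by $A_0,\dots,A_d,E_0^*(y),\dots,E_d^*(y)$. $\langle Y\rangle_{\mathbb F}$ denotes $\mathbb F$-linear span (the zero space if $Y$ is empty). *)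

theory Defs
  imports Main
begin

text \<open>Matrices over a field indexed by a finite type 'x (the set X is UNIV :: 'x set).\<close>
type_synonym ('x, 'f) mat = "'x \<Rightarrow> 'x \<Rightarrow> 'f"

definition mmul :: "('x::finite, 'f::field) mat \<Rightarrow> ('x, 'f) mat \<Rightarrow> ('x, 'f) mat" where
  "mmul A B = (\<lambda>i j. \<Sum>k\<in>UNIV. A i k * B k j)"

definition madd :: "('x, 'f::field) mat \<Rightarrow> ('x, 'f) mat \<Rightarrow> ('x, 'f) mat" where
  "madd A B = (\<lambda>i j. A i j + B i j)"

definition msmult :: "'f::field \<Rightarrow> ('x, 'f) mat \<Rightarrow> ('x, 'f) mat" where
  "msmult c A = (\<lambda>i j. c * A i j)"

definition mzero :: "('x, 'f::field) mat" where
  "mzero = (\<lambda>i j. 0)"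

definition mone :: "('x, 'f::field) mat" where
  "mone = (\<lambda>i j. if i = j then 1 else 0)"

definition all_ones :: "('x, 'f::field) mat" where
  "all_ones = (\<lambda>i j. 1)"

definition mspan :: "('x::finite, 'f::field) mat set \<Rightarrow> ('x, 'f) mat set" where
  "mspan Y = {M. \<exists>S c. finite S \<and> S \<subseteq> Y \<and> M = (\<lambda>i j. \<Sum>y\<in>S. c y * y i j)}"

definition is_scheme :: "(nat \<Rightarrow> ('x::finite \<times> 'x) set) \<Rightarrow> nat \<Rightarrow> bool" where
  "is_scheme R d \<longleftrightarrow>
     (\<forall>i\<le>d. R i \<noteq> {}) \<and>
     (\<forall>i\<le>d. \<forall>j\<le>d. i \<noteq> j \<longrightarrow> R i \<inter> R j = {}) \<and>
     (\<Union>i\<in>{0..d}. R i) = UNIV \<and>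
     R 0 = {(b, b) | b. True} \<and>
     (\<forall>c\<le>d. \<exists>c'\<le>d. R c' = {(f, e). (e, f) \<in> R c}) \<and>
     (\<forall>i\<le>d. \<forall>j\<le>d. \<forall>k\<le>d. \<forall>m n m' n'. (m, n) \<in> R k \<longrightarrow> (m', n') \<in> R k \<longrightarrow>
        card {l. (m, l) \<in> R i \<and> (l, n) \<in> R j} = card {l. (m', l) \<in> R i \<and> (l, n') \<in> R j})"

text \<open>Intersection number p_{ij}^k, evaluated at some pair (m,n) in R k.\<close>
definition inter_num :: "(nat \<Rightarrow> ('x::finite \<times> 'x) set) \<Rightarrow> nat \<Rightarrow> nat \<Rightarrow> nat \<Rightarrow> nat" where
  "inter_num R i j k = (let (m, n) = (SOME p. p \<in> R k) in card {l. (m, l) \<in> R i \<and> (l, n) \<in> R j})"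

definition conv_idx :: "(nat \<Rightarrow> ('x::finite \<times> 'x) set) \<Rightarrow> nat \<Rightarrow> nat \<Rightarrow> nat" where
  "conv_idx R d c = (SOME c'. c' \<le> d \<and> R c' = {(f, e). (e, f) \<in> R c})"

definition valency :: "(nat \<Rightarrow> ('x::finite \<times> 'x) set) \<Rightarrow> nat \<Rightarrow> nat \<Rightarrow> nat" where
  "valency R d a = inter_num R a (conv_idx R d a) 0"

definition quasi_thin :: "(nat \<Rightarrow> ('x::finite \<times> 'x) set) \<Rightarrow> nat \<Rightarrow> bool" where
  "quasi_thin R d \<longleftrightarrow> (\<forall>a\<le>d. valency R d a \<le> 2)"

definition adj :: "(nat \<Rightarrow> ('x::finite \<times> 'x) set) \<Rightarrow> nat \<Rightarrow> ('x, 'f::field) mat" where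
  "adj R a = (\<lambda>i j. if (i, j) \<in> R a then 1 else 0)"

definition dual_idem :: "(nat \<Rightarrow> ('x::finite \<times> 'x) set) \<Rightarrow> 'x \<Rightarrow> nat \<Rightarrow> ('x, 'f::field) mat" where
  "dual_idem R y a = (\<lambda>i j. if i = j \<and> (y, i) \<in> R a then 1 else 0)"

inductive_set gen_alg :: "('x::finite, 'f::field) mat set \<Rightarrow> ('x, 'f) mat set"
  for G where
    gen: "A \<in> G \<Longrightarrow> A \<in> gen_alg G"
  | one: "mone \<in> gen_alg G"
  | zero: "mzero \<in> gen_alg G"
  | add: "A \<in> gen_alg G \<Longrightarrow> B \<in> gen_alg G \<Longrightarrow> madd A B \<in> gen_alg G"
  | smult: "A \<in> gen_alg G \<Longrightarrow> msmult c A \<in> gen_alg G"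
  | mult: "A \<in> gen_alg G \<Longrightarrow> B \<in> gen_alg G \<Longrightarrow> mmul A B \<in> gen_alg G"

definition terwilliger :: "(nat \<Rightarrow> ('x::finite \<times> 'x) set) \<Rightarrow> nat \<Rightarrow> 'x \<Rightarrow> ('x, 'f::field) mat set" where
  "terwilliger R d y = gen_alg ({adj R a | a. a \<le> d} \<union> {dual_idem R y a | a. a \<le> d})"

definition left_ideal :: "('x::finite, 'f::field) mat set \<Rightarrow> ('x, 'f) mat set \<Rightarrow> bool" where
  "left_ideal T L \<longleftrightarrow> L \<subseteq> T \<and> mzero \<in> L \<and>
     (\<forall>A\<in>L. \<forall>B\<in>L. madd A B \<in> L) \<and>
     (\<forall>A\<in>L. msmult (-1) A \<in> L) \<and>
     (\<forall>t\<in>T. \<forall>A\<in>L. mmul t A \<in> L)"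

definition maximal_left_ideal :: "('x::finite, 'f::field) mat set \<Rightarrow> ('x, 'f) mat set \<Rightarrow> bool" where
  "maximal_left_ideal T L \<longleftrightarrow> left_ideal T L \<and> L \<noteq> T \<and>
     (\<forall>L'. left_ideal T L' \<and> L \<subseteq> L' \<longrightarrow> L' = L \<or> L' = T)"

definition jacobson_radical :: "('x::finite, 'f::field) mat set \<Rightarrow> ('x, 'f) mat set" where
  "jacobson_radical T = T \<inter> \<Inter> {L. maximal_left_ideal T L}"

end

theory Submission
  imports Defs
begin

(*
  Write xR_a for the cells around x; quasi-thinness makes every cell thin (one point) or thick
  (two points). The span J_1 consists of the matrices that are constant on every block
  xR_a * xR_b and vanish on the thin * thin blocks.

  J_1 is contained in the radical: it is stable under left multiplication by T, and in
  characteristic 2 each of its elements q satisfies q^3 = 0, since a product through a thick cell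
  picks up the factor |xR_b| = 2 = 0 while one through a thin cell meets a thin * thin block.
  So 1 - s t is invertible in T for every t in J_1, and t lies in every maximal left ideal.

  Conversely, T acts on column vectors, and the annihilators, modulo suitable invariant subspaces,
  of the indicator of a thick cell, of the unit vector at a thin point and of the unit vector at a
  point of a thick cell are maximal left ideals. The invariant subspaces are governed by the
  parities of |yR_c \<inter> xR_b|; double counting makes these parities symmetric between thick cells,
  which is what makes the quotients simple. Lying in all these ideals forces a radical element to
  have vanishing row sums over thick cells, cell-constant columns and zero thin * thin entries,
  i.e. to lie in J_1.
*)

section \<open>Matrices acting on column vectors\<close>

definition mat_vec :: "('x::finite, 'f::field) mat \<Rightarrow> ('x \<Rightarrow> 'f) \<Rightarrow> ('x \<Rightarrow> 'f)" where
  "mat_vec A v = (\<lambda>i. \<Sum>k\<in>UNIV. A i k * v k)"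

lemma mat_vec_mone [simp]: "mat_vec mone v = v"
  by (intro ext) (simp add: mat_vec_def mone_def if_distrib[of "\<lambda>a. a * _"] cong: if_cong)

lemma mat_vec_mzero [simp]: "mat_vec mzero v = (\<lambda>_. 0)"
  by (simp add: mat_vec_def mzero_def)

lemma mat_vec_zero [simp]: "mat_vec A (\<lambda>_. 0) = (\<lambda>_. 0)"
  by (simp add: mat_vec_def)

lemma mat_vec_madd: "mat_vec (madd A B) v = (\<lambda>i. mat_vec A v i + mat_vec B v i)"
  by (simp add: mat_vec_def madd_def distrib_right sum.distrib)

lemma mat_vec_msmult: "mat_vec (msmult c A) v = (\<lambda>i. c * mat_vec A v i)"
  by (simp add: mat_vec_def msmult_def sum_distrib_left mult.assoc)

lemma mat_vec_mmul: "mat_vec (mmul A B) v = mat_vec A (mat_vec B v)"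
proof
  fix i
  have "mat_vec (mmul A B) v i = (\<Sum>k\<in>UNIV. \<Sum>l\<in>UNIV. A i l * B l k * v k)"
    by (simp add: mat_vec_def mmul_def sum_distrib_right)
  also have "\<dots> = (\<Sum>l\<in>UNIV. \<Sum>k\<in>UNIV. A i l * (B l k * v k))"
    by (subst sum.swap) (simp add: mult.assoc)
  also have "\<dots> = mat_vec A (mat_vec B v) i"
    by (simp add: mat_vec_def sum_distrib_left)
  finally show "mat_vec (mmul A B) v i = mat_vec A (mat_vec B v) i" .
qed

lemma mmul_eq_mat_vec_col: "mmul A B i j = mat_vec A (\<lambda>k. B k j) i"
  by (simp add: mmul_def mat_vec_def)

lemma mmul_assoc: "mmul (mmul A B) C = mmul A (mmul B C)"
  by (intro ext) (simp only: mmul_eq_mat_vec_col mat_vec_mmul)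

lemma mmul_mone_left [simp]: "mmul mone A = A"
  by (intro ext) (simp add: mmul_eq_mat_vec_col)

lemma mmul_mone_right [simp]: "mmul A mone = A"
  by (intro ext) (simp add: mmul_def mone_def if_distrib[of "\<lambda>a. _ * a"] cong: if_cong)

lemma mmul_mzero_left [simp]: "mmul mzero A = mzero"
  by (intro ext) (simp add: mmul_def mzero_def)

lemma mmul_madd_left: "mmul (madd A B) C = madd (mmul A C) (mmul B C)"
  by (intro ext) (simp add: mmul_def madd_def distrib_right sum.distrib)

lemma mmul_madd_right: "mmul C (madd A B) = madd (mmul C A) (mmul C B)"
  by (intro ext) (simp add: mmul_def madd_def distrib_left sum.distrib)

lemma mmul_msmult_left: "mmul (msmult c A) B = msmult c (mmul A B)"
  by (intro ext) (simp add: mmul_def msmult_def sum_distrib_left mult.assoc)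

lemma mmul_msmult_right: "mmul A (msmult c B) = msmult c (mmul A B)"
  by (intro ext) (simp add: mmul_def msmult_def sum_distrib_left mult.left_commute)

lemma mat_vec_adj: "mat_vec (adj R c) v y = (\<Sum>k\<in>UNIV. if (y, k) \<in> R c then v k else 0)"
  unfolding mat_vec_def adj_def by (auto intro!: sum.cong)

lemma mat_vec_dual_idem: "mat_vec (dual_idem R z a) v = (\<lambda>y. if (z, y) \<in> R a then v y else 0)"
  by (intro ext) (simp add: mat_vec_def dual_idem_def if_distrib[of "\<lambda>a. a * _"] cong: if_cong)

definition vec_subspace :: "(('x \<Rightarrow> 'f::field) \<Rightarrow> bool) \<Rightarrow> bool" where
  "vec_subspace P \<longleftrightarrow> P (\<lambda>_. 0) \<and> (\<forall>u w. P u \<longrightarrow> P w \<longrightarrow> P (\<lambda>i. u i + w i)) \<and>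
     (\<forall>c u. P u \<longrightarrow> P (\<lambda>i. c * u i))"

lemma vec_subspace_conj: "vec_subspace P \<Longrightarrow> vec_subspace Q \<Longrightarrow> vec_subspace (\<lambda>v. P v \<and> Q v)"
  unfolding vec_subspace_def by blast

lemma vec_subspace_vanishing: "vec_subspace (\<lambda>v. \<forall>y. S y \<longrightarrow> v y = 0)"
  unfolding vec_subspace_def by simp

lemma gen_alg_mat_vec_invariant:
  assumes "s \<in> gen_alg G" "P v" "vec_subspace P" "\<And>g u. g \<in> G \<Longrightarrow> P u \<Longrightarrow> P (mat_vec g u)"
  shows "P (mat_vec s v)"
  using assms(1,2)
  by (induction arbitrary: v rule: gen_alg.induct)
    (use assms(3) in \<open>simp_all add: assms(4) vec_subspace_def mat_vec_madd mat_vec_msmult mat_vec_mmul\<close>)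

lemma gen_alg_mmul_invariant:
  assumes "s \<in> gen_alg G" "P q"
    and "P mzero" "\<And>u w. P u \<Longrightarrow> P w \<Longrightarrow> P (madd u w)" "\<And>c u. P u \<Longrightarrow> P (msmult c u)"
    and "\<And>g u. g \<in> G \<Longrightarrow> P u \<Longrightarrow> P (mmul g u)"
  shows "P (mmul s q)"
  using assms(1,2)
  by (induction arbitrary: q rule: gen_alg.induct) (simp_all add: assms(3-6) mmul_madd_left mmul_msmult_left mmul_assoc)

lemma mspan_subset:
  assumes "mzero \<in> Z" "\<And>A B. A \<in> Z \<Longrightarrow> B \<in> Z \<Longrightarrow> madd A B \<in> Z"
    "\<And>c A. A \<in> Z \<Longrightarrow> msmult c A \<in> Z" "Y \<subseteq> Z"
  shows "mspan Y \<subseteq> Z"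
proof
  fix M assume "M \<in> mspan Y"
  then obtain S c where S: "finite S" "S \<subseteq> Y" and M: "M = (\<lambda>i j. \<Sum>y\<in>S. c y * y i j)"
    unfolding mspan_def by blast
  have "(\<lambda>i j. \<Sum>y\<in>S. c y * y i j) \<in> Z"
    using S
  proof (induction S rule: finite_induct)
    case empty then show ?case using assms(1) by (simp add: mzero_def)
  next
    case (insert a S)
    have "(\<lambda>i j. \<Sum>y\<in>insert a S. c y * y i j) = madd (msmult (c a) a) (\<lambda>i j. \<Sum>y\<in>S. c y * y i j)"
      using insert by (simp add: madd_def msmult_def)
    then show ?case using insert assms(2-4) by auto
  qed
  then show "M \<in> Z" using M by simp
qed

lemma of_nat_char2:
  assumes "(2::'f::field) = 0"
  shows "(of_nat n :: 'f) = (if even n then 0 else 1)"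
proof (cases "even n")
  case True then obtain k where "n = 2 * k" by blast
  then show ?thesis using assms by simp
next
  case False then obtain k where "n = 2 * k + 1" using oddE by blast
  then show ?thesis using assms by simp
qed

lemma add_eq_0_iff_char2:
  assumes "(2::'f::field) = 0"
  shows "(a::'f) + b = 0 \<longleftrightarrow> a = b"
proof -
  have "b + b = 0" using assms by (metis mult_2 mult_zero_left)
  then show ?thesis by (metis add_diff_cancel_right' diff_add_cancel eq_neg_iff_add_eq_0 add_right_cancel)
qed

section \<open>Maximal left ideals and the radical of a matrix algebra\<close>

lemma left_ideal_eq_if_mone_mem: "left_ideal T L \<Longrightarrow> mone \<in> L \<Longrightarrow> L = T"
  unfolding left_ideal_def by (metis mmul_mone_right subsetI subset_antisym)

lemma left_ideal_annihilator_mod: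
  fixes u :: "'x::finite \<Rightarrow> 'f::field"
  assumes "vec_subspace P" and P_invariant: "\<And>s v. s \<in> gen_alg G \<Longrightarrow> P v \<Longrightarrow> P (mat_vec s v)"
  shows "left_ideal (gen_alg G) {s \<in> gen_alg G. P (mat_vec s u)}"
proof -
  have P_zero: "P (\<lambda>_. 0)" and P_add: "\<And>v w. P v \<Longrightarrow> P w \<Longrightarrow> P (\<lambda>i. v i + w i)"
    and P_smult: "\<And>c v. P v \<Longrightarrow> P (\<lambda>i. c * v i)"
    using assms(1) unfolding vec_subspace_def by blast+
  have P_neg: "P (mat_vec (msmult (-1) A) u)" if "P (mat_vec A u)" for A
    using P_smult[OF that, of "-1"] by (simp add: mat_vec_msmult)
  show ?thesis
    unfolding left_ideal_def
    by (auto simp: mat_vec_madd mat_vec_mmul P_zero P_add P_invariant P_neg intro: gen_alg.intros)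
qed

text \<open>The hypothesis \<open>simple\<close> says that the module \<open>T u\<close> modulo the invariant subspace \<open>P\<close>
  is simple.\<close>

lemma maximal_left_ideal_annihilator_mod:
  fixes u :: "'x::finite \<Rightarrow> 'f::field" and P :: "('x \<Rightarrow> 'f) \<Rightarrow> bool"
  assumes subspace: "vec_subspace P"
    and P_invariant: "\<And>s v. s \<in> gen_alg G \<Longrightarrow> P v \<Longrightarrow> P (mat_vec s v)"
    and u: "\<not> P u"
    and simple: "\<And>s. s \<in> gen_alg G \<Longrightarrow> \<not> P (mat_vec s u) \<Longrightarrow>
        \<exists>r\<in>gen_alg G. P (\<lambda>i. mat_vec r (mat_vec s u) i - u i)"
  shows "maximal_left_ideal (gen_alg G) {s \<in> gen_alg G. P (mat_vec s u)}"
proof -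
  let ?T = "gen_alg G" and ?L = "{s \<in> gen_alg G. P (mat_vec s u)}"
  have P_smult: "\<And>c v. P v \<Longrightarrow> P (\<lambda>i. c * v i)"
    using subspace unfolding vec_subspace_def by blast
  have "left_ideal ?T ?L"
    using subspace P_invariant by (rule left_ideal_annihilator_mod)
  moreover have "mone \<notin> ?L"
    using u by simp
  then have "?L \<noteq> ?T"
    using gen_alg.one by blast
  moreover have "L' = ?L \<or> L' = ?T" if L': "left_ideal ?T L'" "?L \<subseteq> L'" for L'
  proof (cases "L' \<subseteq> ?L")
    case False
    then obtain s where s: "s \<in> L'" "s \<in> ?T" "\<not> P (mat_vec s u)"
      using L' unfolding left_ideal_def by blast
    then obtain r where r: "r \<in> ?T" "P (\<lambda>i. mat_vec r (mat_vec s u) i - u i)"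
      using simple by blast
    define q where "q = madd mone (msmult (-1) (mmul r s))"
    have "mat_vec q u = (\<lambda>i. (-1) * (mat_vec r (mat_vec s u) i - u i))"
      unfolding q_def by (simp add: mat_vec_madd mat_vec_msmult mat_vec_mmul algebra_simps)
    then have "P (mat_vec q u)"
      by (simp only:) (rule P_smult[OF r(2)])
    moreover have "q \<in> ?T"
      unfolding q_def using r(1) s(2) by (intro gen_alg.add gen_alg.one gen_alg.smult gen_alg.mult)
    ultimately have "q \<in> ?L" by simp
    moreover have "mmul r s \<in> L'"
      using L' r(1) s(1) unfolding left_ideal_def by blast
    ultimately have "madd q (mmul r s) \<in> L'"
      using L' unfolding left_ideal_def by blast
    moreover have "madd q (mmul r s) = mone"
      unfolding q_def by (intro ext) (simp add: madd_def msmult_def)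
    ultimately have "mone \<in> L'" by simp
    then show ?thesis using left_ideal_eq_if_mone_mem[OF L'(1)] by blast
  qed (use L' in blast)
  ultimately show ?thesis unfolding maximal_left_ideal_def by blast
qed

lemma left_ideal_add_left_multiples:
  assumes L: "left_ideal (gen_alg G) L" and t: "t \<in> gen_alg G"
  shows "left_ideal (gen_alg G) {madd l (mmul s t) | l s. l \<in> L \<and> s \<in> gen_alg G}"
    (is "left_ideal ?T ?L'")
  unfolding left_ideal_def
proof (intro conjI ballI)
  show "?L' \<subseteq> ?T"
    using L t unfolding left_ideal_def by (auto intro: gen_alg.intros)
  have "mzero = madd mzero (mmul mzero t)"
    unfolding mmul_mzero_left by (intro ext) (simp add: madd_def mzero_def)
  then show "mzero \<in> ?L'"
    using L gen_alg.zero unfolding left_ideal_def by blast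
next
  fix A B assume "A \<in> ?L'" "B \<in> ?L'"
  then obtain l1 s1 l2 s2 where h: "A = madd l1 (mmul s1 t)" "l1 \<in> L" "s1 \<in> ?T"
    "B = madd l2 (mmul s2 t)" "l2 \<in> L" "s2 \<in> ?T" by blast
  have "madd A B = madd (madd l1 l2) (mmul (madd s1 s2) t)"
    unfolding h mmul_madd_left by (intro ext) (simp add: madd_def)
  then show "madd A B \<in> ?L'"
    using h L unfolding left_ideal_def by (blast intro: gen_alg.add)
next
  fix A assume "A \<in> ?L'"
  then obtain l s where h: "A = madd l (mmul s t)" "l \<in> L" "s \<in> ?T" by blast
  have "msmult (-1) A = madd (msmult (-1) l) (mmul (msmult (-1) s) t)"
    unfolding h mmul_msmult_left by (intro ext) (simp add: madd_def msmult_def)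
  then show "msmult (-1) A \<in> ?L'"
    using h L unfolding left_ideal_def by (blast intro: gen_alg.smult)
next
  fix r A assume r: "r \<in> ?T" and "A \<in> ?L'"
  then obtain l s where h: "A = madd l (mmul s t)" "l \<in> L" "s \<in> ?T" by blast
  have "mmul r A = madd (mmul r l) (mmul (mmul r s) t)"
    unfolding h mmul_madd_right mmul_assoc ..
  then show "mmul r A \<in> ?L'"
    using h r L unfolding left_ideal_def by (blast intro: gen_alg.mult)
qed

text \<open>If \<open>t\<close> missed a maximal left ideal \<open>L\<close>, then \<open>L + T t = T\<close> would give \<open>1 - s t \<in> L\<close> for
  some \<open>s\<close>, and a left inverse of \<open>1 - s t\<close> would put \<open>1\<close> into \<open>L\<close>.\<close>

lemma jacobson_radical_if_left_quasi_regular: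
  assumes t: "t \<in> gen_alg G"
    and quasi_regular: "\<And>s. s \<in> gen_alg G \<Longrightarrow>
      \<exists>w\<in>gen_alg G. mmul w (madd mone (msmult (-1) (mmul s t))) = mone"
  shows "t \<in> jacobson_radical (gen_alg G)"
  unfolding jacobson_radical_def
proof (intro IntI InterI t, clarsimp)
  let ?T = "gen_alg G"
  fix L assume "maximal_left_ideal ?T L"
  then have L: "left_ideal ?T L" and L_proper: "L \<noteq> ?T"
    and L_max: "\<And>L'. left_ideal ?T L' \<Longrightarrow> L \<subseteq> L' \<Longrightarrow> L' = L \<or> L' = ?T"
    unfolding maximal_left_ideal_def by blast+
  show "t \<in> L"
  proof (rule ccontr)
    assume "t \<notin> L"
    define L' where "L' = {madd l (mmul s t) | l s. l \<in> L \<and> s \<in> ?T}"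
    have "l \<in> L'" if "l \<in> L" for l
    proof -
      have "l = madd l (mmul mzero t)"
        unfolding mmul_mzero_left by (intro ext) (simp add: madd_def mzero_def)
      then show ?thesis unfolding L'_def using that gen_alg.zero by blast
    qed
    moreover have "t \<in> L'"
    proof -
      have "t = madd mzero (mmul mone t)" by (intro ext) (simp add: madd_def mzero_def)
      then show ?thesis using L unfolding L'_def left_ideal_def by (blast intro: gen_alg.one)
    qed
    ultimately have "L' = ?T"
      using L_max[OF left_ideal_add_left_multiples[OF L t, folded L'_def]] \<open>t \<notin> L\<close> by blast
    then obtain l s where ls: "mone = madd l (mmul s t)" "l \<in> L" "s \<in> ?T"
      unfolding L'_def using gen_alg.one by blast
    have "l = madd mone (msmult (-1) (mmul s t))"
      using ls(1) by (intro ext) (simp add: madd_def msmult_def fun_eq_iff)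
    then obtain w where "w \<in> ?T" "mmul w l = mone" using quasi_regular[OF ls(3)] by blast
    then have "mone \<in> L" using ls(2) L unfolding left_ideal_def by metis
    then show False using left_ideal_eq_if_mone_mem[OF L] L_proper by blast
  qed
qed

lemma left_inverse_if_cube_zero:
  assumes "mmul (mmul q q) q = mzero"
  shows "mmul (madd mone (madd q (mmul q q))) (madd mone (msmult (-1) q)) = mone"
proof -
  have "mmul (madd mone (madd q (mmul q q))) q = madd q (madd (mmul q q) mzero)"
    unfolding mmul_madd_left assms by simp
  then show ?thesis
    unfolding mmul_madd_right mmul_msmult_right
    by (intro ext) (simp add: mmul_madd_right madd_def msmult_def mzero_def)
qed

section \<open>Cells of a quasi-thin scheme\<close>

locale quasi_thin_scheme =
  fixes R :: "nat \<Rightarrow> ('x::finite \<times> 'x) set" and d :: nat and x :: 'x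
  assumes scheme: "is_scheme R d" and quasi_thin: "quasi_thin R d"
begin

lemma rel_nonempty: assumes "a \<le> d" shows "R a \<noteq> {}"
proof -
  have "\<forall>a\<le>d. R a \<noteq> {}"
    using scheme unfolding is_scheme_def by (elim conjE) assumption
  then show ?thesis using assms by blast
qed

lemma rel_disjoint: "a \<le> d \<Longrightarrow> b \<le> d \<Longrightarrow> p \<in> R a \<Longrightarrow> p \<in> R b \<Longrightarrow> a = b"
proof -
  have "\<forall>a\<le>d. \<forall>b\<le>d. a \<noteq> b \<longrightarrow> R a \<inter> R b = {}"
    using scheme unfolding is_scheme_def by (elim conjE) assumption
  then show "a \<le> d \<Longrightarrow> b \<le> d \<Longrightarrow> p \<in> R a \<Longrightarrow> p \<in> R b \<Longrightarrow> a = b" by blast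
qed

lemma rel_cover: "\<exists>a\<le>d. p \<in> R a"
proof -
  have "(\<Union>a\<in>{0..d}. R a) = UNIV"
    using scheme unfolding is_scheme_def by (elim conjE) assumption
  then have "p \<in> (\<Union>a\<in>{0..d}. R a)" by simp
  then show ?thesis by auto
qed

lemma R0_iff: "(m, n) \<in> R 0 \<longleftrightarrow> m = n"
proof -
  have "R 0 = {(b, b) | b. True}"
    using scheme unfolding is_scheme_def by (elim conjE) assumption
  then show ?thesis by auto
qed

lemma rel_regular:
  assumes "i \<le> d" "j \<le> d" "k \<le> d" "(m, n) \<in> R k" "(m', n') \<in> R k"
  shows "card {l. (m, l) \<in> R i \<and> (l, n) \<in> R j} = card {l. (m', l) \<in> R i \<and> (l, n') \<in> R j}"
proof -
  have "\<forall>i\<le>d. \<forall>j\<le>d. \<forall>k\<le>d. \<forall>m n m' n'. (m, n) \<in> R k \<longrightarrow> (m', n') \<in> R k \<longrightarrow>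
        card {l. (m, l) \<in> R i \<and> (l, n) \<in> R j} = card {l. (m', l) \<in> R i \<and> (l, n') \<in> R j}"
    using scheme unfolding is_scheme_def by (elim conjE) assumption
  then show ?thesis using assms by blast
qed

definition rel_idx :: "'x \<times> 'x \<Rightarrow> nat" where
  "rel_idx p = (THE a. a \<le> d \<and> p \<in> R a)"

lemma rel_idx: "rel_idx p \<le> d" "p \<in> R (rel_idx p)"
proof -
  have "\<exists>!a. a \<le> d \<and> p \<in> R a"
    using rel_cover rel_disjoint by blast
  then have "rel_idx p \<le> d \<and> p \<in> R (rel_idx p)"
    unfolding rel_idx_def by (rule theI')
  then show "rel_idx p \<le> d" "p \<in> R (rel_idx p)" by auto
qed

lemma rel_idx_eq: "a \<le> d \<Longrightarrow> p \<in> R a \<Longrightarrow> rel_idx p = a"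
  using rel_idx rel_disjoint by blast

abbreviation conv :: "nat \<Rightarrow> nat" where
  "conv a \<equiv> conv_idx R d a"

lemma conv_rel: assumes "a \<le> d" shows "conv a \<le> d" "(m, n) \<in> R (conv a) \<longleftrightarrow> (n, m) \<in> R a"
proof -
  have "\<forall>a\<le>d. \<exists>a'\<le>d. R a' = {(f, e). (e, f) \<in> R a}"
    using scheme unfolding is_scheme_def by (elim conjE) assumption
  then have "\<exists>a'. a' \<le> d \<and> R a' = {(f, e). (e, f) \<in> R a}"
    using assms by blast
  from someI_ex[OF this] have "conv a \<le> d \<and> R (conv a) = {(f, e). (e, f) \<in> R a}"
    unfolding conv_idx_def .
  then show "conv a \<le> d" "(m, n) \<in> R (conv a) \<longleftrightarrow> (n, m) \<in> R a" by auto
qed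

definition cell :: "nat \<Rightarrow> 'x set" where
  "cell a = {y. (x, y) \<in> R a}"

definition cell_of :: "'x \<Rightarrow> nat" where
  "cell_of y = rel_idx (x, y)"

abbreviation val :: "nat \<Rightarrow> nat" where
  "val a \<equiv> card (cell a)"

definition cell_rep :: "nat \<Rightarrow> 'x" where
  "cell_rep a = (SOME y. y \<in> cell a)"

lemma cell_of_le: "cell_of y \<le> d"
  using rel_idx unfolding cell_of_def by blast

lemma in_R_x_iff: "a \<le> d \<Longrightarrow> (x, y) \<in> R a \<longleftrightarrow> cell_of y = a"
  using rel_idx rel_idx_eq unfolding cell_of_def by blast

lemma mem_cell_iff: "a \<le> d \<Longrightarrow> y \<in> cell a \<longleftrightarrow> cell_of y = a"
  unfolding cell_def by (simp add: in_R_x_iff)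

lemma cell_eq: "a \<le> d \<Longrightarrow> cell a = {y. cell_of y = a}"
  using mem_cell_iff by blast

lemma mem_cell_of: "y \<in> cell (cell_of y)"
  by (simp add: mem_cell_iff cell_of_le)

lemma card_return_paths: assumes "a \<le> d"
  shows "card {l. (m, l) \<in> R a \<and> (l, m) \<in> R (conv a)} = val a"
proof -
  have "card {l. (m, l) \<in> R a \<and> (l, m) \<in> R (conv a)} = card {l. (x, l) \<in> R a \<and> (l, x) \<in> R (conv a)}"
    by (rule rel_regular[of a "conv a" 0]) (use assms conv_rel in \<open>auto simp: R0_iff\<close>)
  also have "{l. (x, l) \<in> R a \<and> (l, x) \<in> R (conv a)} = cell a"
    using conv_rel assms unfolding cell_def by auto
  finally show ?thesis .
qed

lemma valency_eq_val: assumes "a \<le> d" shows "valency R d a = val a"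
proof -
  obtain m n where mn: "(SOME p. p \<in> R 0) = (m, n)" by fastforce
  have "(SOME p. p \<in> R 0) \<in> R 0"
    by (rule someI[of _ "(x, x)"]) (simp add: R0_iff)
  then have "m = n" using mn by (simp add: R0_iff)
  then show ?thesis
    unfolding valency_def inter_num_def using mn card_return_paths[OF assms, of m] by simp
qed

lemma val_cases: assumes "a \<le> d" shows "val a = 1 \<or> val a = 2"
proof -
  obtain m n where "(m, n) \<in> R a" using rel_nonempty[OF assms] by auto
  then have "n \<in> {l. (m, l) \<in> R a \<and> (l, m) \<in> R (conv a)}" using conv_rel assms by auto
  then have "0 < card {l. (m, l) \<in> R a \<and> (l, m) \<in> R (conv a)}"
    by (auto simp: card_gt_0_iff)
  then have "0 < val a"
    using card_return_paths[OF assms] by simp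
  moreover have "val a \<le> 2"
    using quasi_thin assms valency_eq_val unfolding quasi_thin_def by auto
  ultimately show ?thesis by linarith
qed

lemma cell_rep: assumes "a \<le> d" shows "cell_rep a \<in> cell a" "cell_of (cell_rep a) = a"
proof -
  have "cell a \<noteq> {}" using val_cases[OF assms] by auto
  then show "cell_rep a \<in> cell a" unfolding cell_rep_def by (simp add: some_in_eq)
  then show "cell_of (cell_rep a) = a" using mem_cell_iff assms by blast
qed

lemma thin_cell: "val (cell_of y) = 1 \<Longrightarrow> cell (cell_of y) = {y}"
  using mem_cell_of[of y] by (auto simp: card_1_singleton_iff)

lemma thin_cell_iff: assumes "val (cell_of y) = 1" shows "cell_of z = cell_of y \<longleftrightarrow> z = y"
proof -
  have "cell_of z = cell_of y \<longleftrightarrow> z \<in> cell (cell_of y)"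
    using mem_cell_iff[OF cell_of_le] by simp
  then show ?thesis using thin_cell[OF assms] by simp
qed

lemma thick_cell: assumes "val (cell_of y) = 2" obtains y' where "y' \<noteq> y" "cell (cell_of y) = {y, y'}"
proof -
  obtain p q where pq: "cell (cell_of y) = {p, q}" "p \<noteq> q"
    using assms by (meson card_2_iff)
  have "y = p \<or> y = q" using pq mem_cell_of[of y] by blast
  then show ?thesis
  proof
    assume "y = p"
    then have "cell (cell_of y) = {y, q}" using pq by simp
    moreover have "q \<noteq> y" using pq(2) \<open>y = p\<close> by simp
    ultimately show ?thesis by (rule that[rotated])
  next
    assume "y = q"
    then have "cell (cell_of y) = {y, p}" using pq by auto
    moreover have "p \<noteq> y" using pq(2) \<open>y = q\<close> by simp
    ultimately show ?thesis by (rule that[rotated])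
  qed
qed

definition succ_count :: "nat \<Rightarrow> 'x \<Rightarrow> nat \<Rightarrow> nat" where
  "succ_count c y b = card {z \<in> cell b. (y, z) \<in> R c}"

definition pred_count :: "nat \<Rightarrow> nat \<Rightarrow> 'x \<Rightarrow> nat" where
  "pred_count c a z = card {y \<in> cell a. (y, z) \<in> R c}"

lemma succ_count_cong:
  assumes "b \<le> d" "c \<le> d" "cell_of y = cell_of y'"
  shows "succ_count c y b = succ_count c y' b"
proof -
  have eq: "{z \<in> cell b. (y, z) \<in> R c} = {l. (x, l) \<in> R b \<and> (l, y) \<in> R (conv c)}" for y
    using conv_rel[OF assms(2)] unfolding cell_def by auto
  show ?thesis
    unfolding succ_count_def eq
    by (rule rel_regular[of b "conv c" "cell_of y"])
      (use assms conv_rel cell_of_le in \<open>auto simp: in_R_x_iff\<close>)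
qed

lemma pred_count_cong:
  assumes "a \<le> d" "c \<le> d" "cell_of z = cell_of z'"
  shows "pred_count c a z = pred_count c a z'"
proof -
  have eq: "{y \<in> cell a. (y, z) \<in> R c} = {l. (x, l) \<in> R a \<and> (l, z) \<in> R c}" for z
    unfolding cell_def by auto
  show ?thesis
    unfolding pred_count_def eq
    by (rule rel_regular[of a c "cell_of z"]) (use assms cell_of_le in \<open>auto simp: in_R_x_iff\<close>)
qed

lemma pred_count_conv: assumes "c \<le> d" shows "pred_count c a z = succ_count (conv c) z a"
proof -
  have "{y \<in> cell a. (y, z) \<in> R c} = {y \<in> cell a. (z, y) \<in> R (conv c)}"
    using conv_rel(2)[OF assms] by blast
  then show ?thesis unfolding pred_count_def succ_count_def by simp
qed

text \<open>Double counting of the \<open>R\<^sub>c\<close>-edges from \<open>xR\<^sub>a\<close> to \<open>xR\<^sub>b\<close>.\<close>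

lemma val_mult_succ_count:
  assumes "a \<le> d" "b \<le> d" "c \<le> d" "y \<in> cell a" "z \<in> cell b"
  shows "val a * succ_count c y b = val b * pred_count c a z"
proof -
  have "(\<Sum>y'\<in>cell a. succ_count c y' b) = (\<Sum>z'\<in>cell b. pred_count c a z')"
    unfolding succ_count_def pred_count_def
    by (simp add: card_eq_sum sum.inter_filter del: sum_constant) (rule sum.swap)
  moreover have "(\<Sum>y'\<in>cell a. succ_count c y' b) = (\<Sum>y'\<in>cell a. succ_count c y b)"
    by (intro sum.cong refl succ_count_cong) (use assms mem_cell_iff in auto)
  moreover have "(\<Sum>z'\<in>cell b. pred_count c a z') = (\<Sum>z'\<in>cell b. pred_count c a z)"
    by (intro sum.cong refl pred_count_cong) (use assms mem_cell_iff in auto)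
  ultimately show ?thesis by simp
qed

lemma succ_count_thick_eq_pred_count:
  assumes "a \<le> d" "b \<le> d" "c \<le> d" "val a = 2" "val b = 2"
  shows "succ_count c (cell_rep a) b = pred_count c a (cell_rep b)"
  using val_mult_succ_count[OF assms(1-3) cell_rep(1)[OF assms(1)] cell_rep(1)[OF assms(2)]] assms by simp

lemma even_succ_count_thin_thick:
  assumes "b \<le> d" "c \<le> d" "val (cell_of y) = 1" "val b = 2"
  shows "even (succ_count c y b)"
proof -
  have "succ_count c y b = 2 * pred_count c (cell_of y) (cell_rep b)"
    using val_mult_succ_count[OF cell_of_le assms(1,2) mem_cell_of[of y] cell_rep(1)[OF assms(1)]] assms
    by simp
  then show ?thesis by simp
qed

lemma even_pred_count_thick_thin:
  assumes "a \<le> d" "b \<le> d" "c \<le> d" "val a = 2" "val b = 1"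
  shows "even (pred_count c a (cell_rep b))"
proof -
  have "pred_count c a (cell_rep b) = 2 * succ_count c (cell_rep a) b"
    using val_mult_succ_count[OF assms(1-3) cell_rep(1)[OF assms(1)] cell_rep(1)[OF assms(2)]] assms
    by simp
  then show ?thesis by simp
qed

text \<open>Thick cells \<open>a\<close>, \<open>b\<close> are linked if some relation \<open>R\<^sub>c\<close> joins a point of \<open>xR\<^sub>a\<close> to an odd
  number of points of \<open>xR\<^sub>b\<close>; in characteristic 2 these are exactly the nonzero entries of the
  action of \<open>A\<^sub>c\<close> between thick cells.\<close>

definition odd_link :: "nat \<Rightarrow> nat \<Rightarrow> bool" where
  "odd_link a b \<longleftrightarrow> a \<le> d \<and> b \<le> d \<and> val a = 2 \<and> val b = 2 \<and> (\<exists>c\<le>d. odd (succ_count c (cell_rep a) b))"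

abbreviation linked :: "nat \<Rightarrow> nat \<Rightarrow> bool" where
  "linked \<equiv> odd_link\<^sup>*\<^sup>*"

lemma odd_link_sym: assumes "odd_link a b" shows "odd_link b a"
proof -
  obtain c where c: "a \<le> d" "b \<le> d" "val a = 2" "val b = 2" "c \<le> d" "odd (succ_count c (cell_rep a) b)"
    using assms unfolding odd_link_def by blast
  then have "odd (succ_count (conv c) (cell_rep b) a)"
    using succ_count_thick_eq_pred_count pred_count_conv by simp
  then show ?thesis using c conv_rel unfolding odd_link_def by blast
qed

lemma odd_link_if_odd_succ_count:
  assumes "val (cell_of y) = 2" "b \<le> d" "val b = 2" "c \<le> d" "odd (succ_count c y b)"
  shows "odd_link (cell_of y) b"
proof -
  have "succ_count c (cell_rep (cell_of y)) b = succ_count c y b"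
    by (intro succ_count_cong assms cell_rep(2) cell_of_le)
  then show ?thesis
    using assms cell_of_le unfolding odd_link_def by auto
qed

lemma linked_thick: "linked b0 a \<Longrightarrow> b0 \<le> d \<Longrightarrow> val b0 = 2 \<Longrightarrow> a \<le> d \<and> val a = 2"
  by (induction rule: rtranclp_induct) (auto simp: odd_link_def)

lemma even_succ_count_off_linked:
  assumes "b0 \<le> d" "val b0 = 2" "linked b0 b" "\<not> linked b0 (cell_of y)" "b \<le> d" "c \<le> d"
  shows "even (succ_count c y b)"
proof -
  have b_thick: "val b = 2" using linked_thick assms(1-3) by blast
  consider "val (cell_of y) = 1" | "val (cell_of y) = 2" using val_cases cell_of_le by blast
  then show ?thesis
  proof cases
    case 1 then show ?thesis using even_succ_count_thin_thick[OF assms(5,6)] b_thick by blast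
  next
    case 2
    have "\<not> odd_link b (cell_of y)"
      using assms(3,4) by (meson rtranclp.rtrancl_into_rtrancl)
    then show ?thesis
      using odd_link_if_odd_succ_count[OF 2 assms(5) b_thick assms(6)] odd_link_sym by blast
  qed
qed

lemma even_pred_count_off_linked:
  assumes "b0 \<le> d" "val b0 = 2" "linked b0 b" "\<not> linked b0 a" "a \<le> d" "val a = 2" "c \<le> d"
  shows "even (pred_count c a (cell_rep b))"
proof -
  have b: "b \<le> d" "val b = 2" using linked_thick assms(1-3) by blast+
  have "\<not> odd_link a b"
    using assms(3,4) odd_link_sym by (meson rtranclp.rtrancl_into_rtrancl)
  then show ?thesis
    using succ_count_thick_eq_pred_count[OF assms(5) b(1) assms(7,6) b(2)] assms(5-7) b
    unfolding odd_link_def by auto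
qed

section \<open>Cell-constant vectors\<close>

lemma sum_UNIV_cells: "(\<Sum>k\<in>UNIV. f k) = (\<Sum>b\<le>d. \<Sum>k\<in>cell b. f k)"
proof -
  have "(\<Sum>b\<le>d. sum f {k \<in> UNIV. cell_of k = b}) = sum f UNIV"
    by (rule sum.group) (use cell_of_le in auto)
  moreover have "{k \<in> UNIV. cell_of k = b} = cell b" if "b \<le> d" for b
    using mem_cell_iff[OF that] by auto
  ultimately show ?thesis by simp
qed

definition cell_const :: "('x \<Rightarrow> 'f) \<Rightarrow> bool" where
  "cell_const v \<longleftrightarrow> (\<forall>y z. cell_of y = cell_of z \<longrightarrow> v y = v z)"

lemma cell_const_rep: "cell_const v \<Longrightarrow> b \<le> d \<Longrightarrow> k \<in> cell b \<Longrightarrow> v k = v (cell_rep b)"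
  unfolding cell_const_def using mem_cell_iff cell_rep(2) by metis

lemma sum_cell_const:
  assumes "b \<le> d" "cell_const f"
  shows "(\<Sum>k\<in>cell b. (f k :: 'f::field)) = of_nat (val b) * f (cell_rep b)"
  using cell_const_rep[OF assms(2,1)] by simp

lemma mat_vec_adj_cell_const:
  assumes "cell_const v"
  shows "mat_vec (adj R c) v y = (\<Sum>b\<le>d. of_nat (succ_count c y b) * (v (cell_rep b) :: 'f::field))"
  unfolding mat_vec_adj sum_UNIV_cells
proof (intro sum.cong refl)
  fix b assume "b \<in> {..d}"
  have "(\<Sum>k\<in>cell b. if (y, k) \<in> R c then v k else 0) = (\<Sum>k\<in>{k \<in> cell b. (y, k) \<in> R c}. v k)"
    by (simp add: sum.inter_filter)
  also have "\<dots> = (\<Sum>k\<in>{k \<in> cell b. (y, k) \<in> R c}. v (cell_rep b))"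
    using cell_const_rep[OF assms] \<open>b \<in> {..d}\<close> by (intro sum.cong) auto
  finally show "(\<Sum>k\<in>cell b. if (y, k) \<in> R c then v k else 0) = of_nat (succ_count c y b) * v (cell_rep b)"
    by (simp add: succ_count_def)
qed

abbreviation \<T> :: "('x, 'f::field) mat set" where
  "\<T> \<equiv> terwilliger R d x"

lemma T_closed:
  shows "mone \<in> \<T>" and "mzero \<in> \<T>"
    and "A \<in> \<T> \<Longrightarrow> B \<in> \<T> \<Longrightarrow> madd A B \<in> \<T>"
    and "A \<in> \<T> \<Longrightarrow> msmult c A \<in> \<T>"
    and "A \<in> \<T> \<Longrightarrow> B \<in> \<T> \<Longrightarrow> mmul A B \<in> \<T>"
    and "a \<le> d \<Longrightarrow> adj R a \<in> \<T>"
    and "a \<le> d \<Longrightarrow> dual_idem R x a \<in> \<T>"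
  unfolding terwilliger_def by (auto intro: gen_alg.intros)

lemma mat_vec_dual_idem_cell:
  "a \<le> d \<Longrightarrow> mat_vec (dual_idem R x a) v = (\<lambda>y. if cell_of y = a then v y else 0)"
  by (simp add: mat_vec_dual_idem in_R_x_iff)

lemma T_mat_vec_invariant:
  fixes P :: "('x \<Rightarrow> 'f::field) \<Rightarrow> bool"
  assumes "s \<in> \<T>" "P v" "vec_subspace P"
    and "\<And>c u. c \<le> d \<Longrightarrow> P u \<Longrightarrow> P (mat_vec (adj R c) u)"
    and "\<And>a u. a \<le> d \<Longrightarrow> P u \<Longrightarrow> P (\<lambda>y. if cell_of y = a then u y else 0)"
  shows "P (mat_vec s v)"
  using assms(1-3) unfolding terwilliger_def
proof (rule gen_alg_mat_vec_invariant)
  fix g :: "('x, 'f) mat" and u assume g: "g \<in> {adj R a |a. a \<le> d} \<union> {dual_idem R x a |a. a \<le> d}" and u: "P u"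
  then consider a where "a \<le> d" "g = adj R a" | a where "a \<le> d" "g = dual_idem R x a"
    by blast
  then show "P (mat_vec g u)"
    by cases (use u assms(4,5) in \<open>simp_all add: mat_vec_dual_idem_cell\<close>)
qed

lemma vec_subspace_cell_const: "vec_subspace cell_const"
  unfolding vec_subspace_def cell_const_def by (intro conjI allI impI) metis+

lemma cell_const_restrict:
  assumes "cell_const u"
  shows "cell_const (\<lambda>y. if cell_of y = a then u y else 0)"
  unfolding cell_const_def
proof (intro allI impI)
  fix y z assume yz: "cell_of y = cell_of z"
  then have "u y = u z" using assms unfolding cell_const_def by blast
  then show "(if cell_of y = a then u y else 0) = (if cell_of z = a then u z else 0)" using yz by simp
qed

lemma cell_const_mat_vec:
  assumes "s \<in> \<T>" "cell_const (v :: 'x \<Rightarrow> 'f::field)"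
  shows "cell_const (mat_vec s v)"
proof (rule T_mat_vec_invariant[where P = cell_const, OF assms])
  show "vec_subspace (cell_const :: ('x \<Rightarrow> 'f) \<Rightarrow> bool)"
    by (rule vec_subspace_cell_const)
  show "cell_const (mat_vec (adj R c) u)" if "c \<le> d" "cell_const (u :: 'x \<Rightarrow> 'f)" for c u
    unfolding cell_const_def mat_vec_adj_cell_const[OF that(2)]
  proof (intro allI impI sum.cong refl)
    fix y z b assume "cell_of y = cell_of z" "b \<in> {..d}"
    then have "succ_count c y b = succ_count c z b" using that(1) by (intro succ_count_cong) simp_all
    then show "of_nat (succ_count c y b) * u (cell_rep b) = of_nat (succ_count c z b) * u (cell_rep b)"
      by simp
  qed
  show "cell_const (\<lambda>y. if cell_of y = a then u y else 0)" if "cell_const (u :: 'x \<Rightarrow> 'f)" for a u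
    using that by (rule cell_const_restrict)
qed

definition cell_sum :: "nat \<Rightarrow> ('x \<Rightarrow> 'f::field) \<Rightarrow> 'f" where
  "cell_sum a v = (\<Sum>y\<in>cell a. v y)"

lemma cell_sum_restrict:
  "a \<le> d \<Longrightarrow> cell_sum a (\<lambda>y. if cell_of y = e then v y else 0) = (if a = e then cell_sum a v else 0)"
  unfolding cell_sum_def by (auto simp: mem_cell_iff intro: sum.neutral)

lemma cell_sum_mat_vec_adj:
  assumes "a \<le> d" "c \<le> d"
  shows "cell_sum a (mat_vec (adj R c) v) =
    (\<Sum>b\<le>d. of_nat (pred_count c a (cell_rep b)) * cell_sum b (v :: 'x \<Rightarrow> 'f::field))"
proof -
  have "cell_sum a (mat_vec (adj R c) v) = (\<Sum>k\<in>UNIV. \<Sum>y\<in>cell a. if (y, k) \<in> R c then v k else 0)"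
    unfolding cell_sum_def mat_vec_adj by (rule sum.swap)
  also have "\<dots> = (\<Sum>k\<in>UNIV. of_nat (pred_count c a k) * v k)"
    by (simp add: sum.inter_filter[symmetric] pred_count_def)
  also have "\<dots> = (\<Sum>b\<le>d. \<Sum>k\<in>cell b. of_nat (pred_count c a k) * v k)"
    by (rule sum_UNIV_cells)
  also have "\<dots> = (\<Sum>b\<le>d. of_nat (pred_count c a (cell_rep b)) * cell_sum b v)"
  proof (intro sum.cong refl)
    fix b assume b: "b \<in> {..d}"
    have "pred_count c a k = pred_count c a (cell_rep b)" if "k \<in> cell b" for k
      using that b by (intro pred_count_cong assms) (simp add: mem_cell_iff cell_rep(2))
    then show "(\<Sum>k\<in>cell b. of_nat (pred_count c a k) * v k) = of_nat (pred_count c a (cell_rep b)) * cell_sum b v"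
      by (simp add: cell_sum_def sum_distrib_left)
  qed
  finally show ?thesis .
qed

section \<open>Invariant subspaces in characteristic 2\<close>

lemma cell_const_iff_thick_cell_sums:
  assumes char2: "(2::'f::field) = 0"
  shows "cell_const (v :: 'x \<Rightarrow> 'f) \<longleftrightarrow> (\<forall>a\<le>d. val a = 2 \<longrightarrow> cell_sum a v = 0)"
proof -
  have pair_sum: "cell_sum (cell_of y) v = 0 \<longleftrightarrow> v y = v y'"
    if "y' \<noteq> y" "cell (cell_of y) = {y, y'}" for y y'
    using that add_eq_0_iff_char2[OF char2] unfolding cell_sum_def by simp
  show ?thesis
  proof
    assume const: "cell_const v"
    show "\<forall>a\<le>d. val a = 2 \<longrightarrow> cell_sum a v = 0"
    proof (intro allI impI)
      fix a assume a: "a \<le> d" "val a = 2"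
      then have thick: "val (cell_of (cell_rep a)) = 2" by (simp add: cell_rep(2))
      obtain y' where "y' \<noteq> cell_rep a" "cell (cell_of (cell_rep a)) = {cell_rep a, y'}"
        using thick_cell[OF thick] .
      moreover have "cell_of y' = cell_of (cell_rep a)"
        using calculation mem_cell_iff[OF cell_of_le] by blast
      ultimately show "cell_sum a v = 0"
        using pair_sum const a(1) cell_rep(2) unfolding cell_const_def by metis
    qed
  next
    assume sums: "\<forall>a\<le>d. val a = 2 \<longrightarrow> cell_sum a v = 0"
    show "cell_const v"
      unfolding cell_const_def
    proof (intro allI impI)
      fix y z assume yz: "cell_of y = cell_of z"
      consider "val (cell_of y) = 1" | "val (cell_of y) = 2" using val_cases cell_of_le by blast
      then show "v y = v z"
      proof cases
        case 1 then show ?thesis using yz thin_cell_iff by metis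
      next
        case 2
        then obtain y' where y': "y' \<noteq> y" "cell (cell_of y) = {y, y'}" by (rule thick_cell)
        then have "z = y \<or> z = y'" using yz mem_cell_of[of z] by auto
        then show ?thesis using pair_sum[OF y'] sums 2 cell_of_le by auto
      qed
    qed
  qed
qed

lemma mat_vec_adj_eq_0:
  assumes char2: "(2::'f::field) = 0" and "cell_const (v :: 'x \<Rightarrow> 'f)"
    and "\<And>b. b \<le> d \<Longrightarrow> v (cell_rep b) = 0 \<or> even (succ_count c y b)"
  shows "mat_vec (adj R c) v y = 0"
  unfolding mat_vec_adj_cell_const[OF assms(2)]
  using assms(3) of_nat_char2[OF char2] by (intro sum.neutral) fastforce

lemma cell_sum_mat_vec_adj_eq_0:
  assumes char2: "(2::'f::field) = 0" and "a \<le> d" "c \<le> d"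
    and "\<And>b. b \<le> d \<Longrightarrow> cell_sum b (v :: 'x \<Rightarrow> 'f) = 0 \<or> even (pred_count c a (cell_rep b))"
  shows "cell_sum a (mat_vec (adj R c) v) = 0"
  unfolding cell_sum_mat_vec_adj[OF assms(2,3)]
  using assms(4) of_nat_char2[OF char2] by (intro sum.neutral) fastforce

definition thick_cell_const :: "('x \<Rightarrow> 'f::field) \<Rightarrow> bool" where
  "thick_cell_const v \<longleftrightarrow> cell_const v \<and> (\<forall>y. val (cell_of y) = 1 \<longrightarrow> v y = 0)"

lemma thick_cell_const_mat_vec:
  assumes char2: "(2::'f::field) = 0" and "s \<in> \<T>" "thick_cell_const (v :: 'x \<Rightarrow> 'f)"
  shows "thick_cell_const (mat_vec s v)"
proof (rule T_mat_vec_invariant[where P = thick_cell_const, OF assms(2,3)])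
  show "vec_subspace (thick_cell_const :: ('x \<Rightarrow> 'f) \<Rightarrow> bool)"
    unfolding thick_cell_const_def by (intro vec_subspace_conj vec_subspace_cell_const vec_subspace_vanishing)
  show "thick_cell_const (mat_vec (adj R c) u)" if c: "c \<le> d" and u: "thick_cell_const (u :: 'x \<Rightarrow> 'f)" for c u
    unfolding thick_cell_const_def
  proof (intro conjI allI impI)
    show "cell_const (mat_vec (adj R c) u)"
      using u cell_const_mat_vec[OF T_closed(6)[OF c]] unfolding thick_cell_const_def by blast
    fix y assume y: "val (cell_of y) = 1"
    show "mat_vec (adj R c) u y = 0"
    proof (rule mat_vec_adj_eq_0[OF char2])
      show "cell_const u" using u unfolding thick_cell_const_def by blast
      fix b assume b: "b \<le> d"
      show "u (cell_rep b) = 0 \<or> even (succ_count c y b)"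
        using val_cases[OF b] u even_succ_count_thin_thick[OF b c y] cell_rep(2)[OF b]
        unfolding thick_cell_const_def by auto
    qed
  qed
  show "thick_cell_const (\<lambda>y. if cell_of y = a then u y else 0)" if "thick_cell_const (u :: 'x \<Rightarrow> 'f)" for a u
    using that cell_const_restrict unfolding thick_cell_const_def by auto
qed

definition linked_cell_const :: "nat \<Rightarrow> ('x \<Rightarrow> 'f::field) \<Rightarrow> bool" where
  "linked_cell_const b0 v \<longleftrightarrow> cell_const v \<and> (\<forall>y. \<not> linked b0 (cell_of y) \<longrightarrow> v y = 0)"

lemma linked_cell_const_mat_vec:
  assumes char2: "(2::'f::field) = 0" and b0: "b0 \<le> d" "val b0 = 2"
    and "s \<in> \<T>" "linked_cell_const b0 (v :: 'x \<Rightarrow> 'f)"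
  shows "linked_cell_const b0 (mat_vec s v)"
proof (rule T_mat_vec_invariant[where P = "linked_cell_const b0", OF assms(4,5)])
  show "vec_subspace (linked_cell_const b0 :: ('x \<Rightarrow> 'f) \<Rightarrow> bool)"
    unfolding linked_cell_const_def by (intro vec_subspace_conj vec_subspace_cell_const vec_subspace_vanishing)
  show "linked_cell_const b0 (mat_vec (adj R c) u)"
    if c: "c \<le> d" and u: "linked_cell_const b0 (u :: 'x \<Rightarrow> 'f)" for c u
    unfolding linked_cell_const_def
  proof (intro conjI allI impI)
    show "cell_const (mat_vec (adj R c) u)"
      using u cell_const_mat_vec[OF T_closed(6)[OF c]] unfolding linked_cell_const_def by blast
    fix y assume y: "\<not> linked b0 (cell_of y)"
    show "mat_vec (adj R c) u y = 0"
    proof (rule mat_vec_adj_eq_0[OF char2])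
      show "cell_const u" using u unfolding linked_cell_const_def by blast
      fix b assume b: "b \<le> d"
      show "u (cell_rep b) = 0 \<or> even (succ_count c y b)"
      proof (cases "linked b0 b")
        case True then show ?thesis using even_succ_count_off_linked[OF b0 True y b c] by blast
      next
        case False then show ?thesis using u cell_rep(2)[OF b] unfolding linked_cell_const_def by metis
      qed
    qed
  qed
  show "linked_cell_const b0 (\<lambda>y. if cell_of y = a then u y else 0)"
    if "linked_cell_const b0 (u :: 'x \<Rightarrow> 'f)" for a u
    using that cell_const_restrict unfolding linked_cell_const_def by auto
qed

definition sums_vanish_off_linked :: "nat \<Rightarrow> ('x \<Rightarrow> 'f::field) \<Rightarrow> bool" where
  "sums_vanish_off_linked b0 v \<longleftrightarrow> (\<forall>a\<le>d. val a = 2 \<longrightarrow> \<not> linked b0 a \<longrightarrow> cell_sum a v = 0)"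

lemma sums_vanish_off_linked_mat_vec:
  assumes char2: "(2::'f::field) = 0" and b0: "b0 \<le> d" "val b0 = 2"
    and "s \<in> \<T>" "sums_vanish_off_linked b0 (v :: 'x \<Rightarrow> 'f)"
  shows "sums_vanish_off_linked b0 (mat_vec s v)"
proof (rule T_mat_vec_invariant[where P = "sums_vanish_off_linked b0", OF assms(4,5)])
  show "vec_subspace (sums_vanish_off_linked b0 :: ('x \<Rightarrow> 'f) \<Rightarrow> bool)"
    unfolding vec_subspace_def sums_vanish_off_linked_def cell_sum_def
    by (simp add: sum.distrib sum_distrib_left[symmetric])
  show "sums_vanish_off_linked b0 (mat_vec (adj R c) u)"
    if c: "c \<le> d" and u: "sums_vanish_off_linked b0 (u :: 'x \<Rightarrow> 'f)" for c u
    unfolding sums_vanish_off_linked_def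
  proof (intro allI impI)
    fix a assume a: "a \<le> d" "val a = 2" "\<not> linked b0 a"
    show "cell_sum a (mat_vec (adj R c) u) = 0"
    proof (rule cell_sum_mat_vec_adj_eq_0[OF char2 a(1) c])
      fix b assume b: "b \<le> d"
      show "cell_sum b u = 0 \<or> even (pred_count c a (cell_rep b))"
        using val_cases[OF b] even_pred_count_thick_thin[OF a(1) b c a(2)]
          even_pred_count_off_linked[OF b0 _ a(3,1,2) c] u b
        unfolding sums_vanish_off_linked_def by blast
    qed
  qed
  show "sums_vanish_off_linked b0 (\<lambda>y. if cell_of y = a then u y else 0)"
    if "sums_vanish_off_linked b0 (u :: 'x \<Rightarrow> 'f)" for a u
    using that unfolding sums_vanish_off_linked_def by (simp add: cell_sum_restrict)
qed

section \<open>Three families of maximal left ideals\<close>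

definition cell_ind :: "nat \<Rightarrow> 'x \<Rightarrow> 'f::field" where
  "cell_ind a = (\<lambda>y. if cell_of y = a then 1 else 0)"

definition unit_vec :: "'x \<Rightarrow> 'x \<Rightarrow> 'f::field" where
  "unit_vec z = (\<lambda>y. if y = z then 1 else 0)"

lemma cell_const_cell_ind: "cell_const (cell_ind a)"
  unfolding cell_const_def cell_ind_def by simp

lemma mat_vec_unit_vec: "mat_vec A (unit_vec z) = (\<lambda>i. A i z)"
  unfolding mat_vec_def unit_vec_def by (intro ext) (simp add: if_distrib[of "\<lambda>a. _ * a"] cong: if_cong)

lemma mat_vec_cell_ind: "a \<le> d \<Longrightarrow> mat_vec A (cell_ind a) i = cell_sum a (A i)"
  unfolding mat_vec_def cell_ind_def cell_sum_def
  by (simp add: if_distrib[of "\<lambda>a. _ * a"] sum.inter_filter[symmetric] cell_eq cong: if_cong)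

lemma mat_vec_adj_cell_ind:
  assumes "e \<le> d"
  shows "mat_vec (adj R c) (cell_ind e) y = (of_nat (succ_count c y e) :: 'f::field)"
proof -
  have "(\<Sum>b\<le>d. of_nat (succ_count c y b) * cell_ind e (cell_rep b)) =
      (\<Sum>b\<le>d. if b = e then of_nat (succ_count c y b) else (0::'f))"
    by (intro sum.cong refl) (simp add: cell_ind_def cell_rep(2))
  then show ?thesis
    unfolding mat_vec_adj_cell_const[OF cell_const_cell_ind] using assms by simp
qed

lemma cell_ind_transport:
  assumes char2: "(2::'f::field) = 0" and "linked a b"
  shows "\<exists>r\<in>\<T>. mat_vec r (cell_ind b) = (cell_ind a :: 'x \<Rightarrow> 'f)"
  using assms(2)
proof (induction rule: rtranclp_induct)
  case base then show ?case using T_closed(1) by force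
next
  case (step b e)
  then obtain r where r: "r \<in> \<T>" "mat_vec r (cell_ind b) = (cell_ind a :: 'x \<Rightarrow> 'f)" by blast
  from step(2) obtain c where c: "b \<le> d" "e \<le> d" "val e = 2" "c \<le> d" "odd (succ_count c (cell_rep b) e)"
    unfolding odd_link_def by blast
  let ?s = "mmul (dual_idem R x b) (adj R c)"
  have "mat_vec ?s (cell_ind e) = (cell_ind b :: 'x \<Rightarrow> 'f)"
  proof
    fix y
    have "odd (succ_count c y e)" if "cell_of y = b"
      using succ_count_cong[OF c(2,4), of y "cell_rep b"] c(5) that cell_rep(2)[OF c(1)] by simp
    then show "mat_vec ?s (cell_ind e) y = (cell_ind b :: 'x \<Rightarrow> 'f) y"
      using of_nat_char2[OF char2]
      by (simp add: mat_vec_mmul mat_vec_dual_idem_cell c mat_vec_adj_cell_ind cell_ind_def[of b])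
  qed
  then have "mat_vec (mmul r ?s) (cell_ind e) = cell_ind a" using r by (simp add: mat_vec_mmul)
  moreover have "mmul r ?s \<in> \<T>" using r c by (intro T_closed)
  ultimately show ?case by blast
qed

lemma maximal_left_ideal_annihilator_cell_ind:
  assumes char2: "(2::'f::field) = 0" and b0: "b0 \<le> d" "val b0 = 2"
  shows "maximal_left_ideal \<T> {s \<in> \<T>. mat_vec s (cell_ind b0) = (\<lambda>_. 0 :: 'f)}"
  unfolding terwilliger_def
proof (rule maximal_left_ideal_annihilator_mod, fold terwilliger_def)
  show "vec_subspace (\<lambda>v::'x \<Rightarrow> 'f. v = (\<lambda>_. 0))"
    unfolding vec_subspace_def by simp
  show "cell_ind b0 \<noteq> (\<lambda>_. 0 :: 'f)"
    using cell_rep(2)[OF b0(1)] unfolding cell_ind_def by (metis one_neq_zero)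
next
  fix s :: "('x, 'f) mat" assume s: "s \<in> \<T>" and nonzero: "mat_vec s (cell_ind b0) \<noteq> (\<lambda>_. 0)"
  let ?w = "mat_vec s (cell_ind b0)"
  have w: "linked_cell_const b0 ?w"
    by (rule linked_cell_const_mat_vec[OF char2 b0 s])
      (use cell_const_cell_ind[of b0] in \<open>simp add: linked_cell_const_def cell_ind_def[of b0]\<close>)
  obtain y where y: "?w y \<noteq> 0" using nonzero by auto
  let ?a = "cell_of y"
  obtain r0 where r0: "r0 \<in> \<T>" "mat_vec r0 (cell_ind ?a) = (cell_ind b0 :: 'x \<Rightarrow> 'f)"
    using cell_ind_transport[OF char2] w y unfolding linked_cell_const_def by blast
  let ?r = "mmul r0 (msmult (inverse (?w y)) (dual_idem R x ?a))"
  have "mat_vec (msmult (inverse (?w y)) (dual_idem R x ?a)) ?w = cell_ind ?a"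
  proof
    fix i
    have "?w i = ?w y" if "cell_of i = ?a"
      using w that unfolding linked_cell_const_def cell_const_def by blast
    then show "mat_vec (msmult (inverse (?w y)) (dual_idem R x ?a)) ?w i = cell_ind ?a i"
      using y by (simp add: mat_vec_msmult mat_vec_dual_idem_cell cell_of_le cell_ind_def)
  qed
  then have "mat_vec ?r ?w = cell_ind b0" using r0 by (simp add: mat_vec_mmul)
  moreover have "?r \<in> \<T>" using r0 cell_of_le by (intro T_closed)
  ultimately show "\<exists>r\<in>\<T>. (\<lambda>i. mat_vec r ?w i - cell_ind b0 i) = (\<lambda>_. 0)"
    by (intro bexI[of _ ?r]) auto
qed simp

lemma maximal_left_ideal_thin_point:
  assumes char2: "(2::'f::field) = 0" and y0: "val (cell_of y0) = 1"
  shows "maximal_left_ideal \<T> {s \<in> \<T>. thick_cell_const (mat_vec s (unit_vec y0 :: 'x \<Rightarrow> 'f))}"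
  unfolding terwilliger_def
proof (rule maximal_left_ideal_annihilator_mod, fold terwilliger_def)
  show "vec_subspace (thick_cell_const :: ('x \<Rightarrow> 'f) \<Rightarrow> bool)"
    unfolding thick_cell_const_def by (intro vec_subspace_conj vec_subspace_cell_const vec_subspace_vanishing)
  show "\<not> thick_cell_const (unit_vec y0 :: 'x \<Rightarrow> 'f)"
    using y0 unfolding thick_cell_const_def unit_vec_def by auto
  show "thick_cell_const (mat_vec s v)" if "s \<in> \<T>" "thick_cell_const v" for s and v :: "'x \<Rightarrow> 'f"
    using thick_cell_const_mat_vec[OF char2] that by blast
next
  fix s :: "('x, 'f) mat" assume s: "s \<in> \<T>" and "\<not> thick_cell_const (mat_vec s (unit_vec y0))"
  let ?w = "mat_vec s (unit_vec y0 :: 'x \<Rightarrow> 'f)"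
  have "cell_const (unit_vec y0 :: 'x \<Rightarrow> 'f)"
    unfolding cell_const_def unit_vec_def using thin_cell_iff[OF y0] by metis
  then have "cell_const ?w" by (rule cell_const_mat_vec[OF s])
  then obtain y1 where y1: "val (cell_of y1) = 1" "?w y1 \<noteq> 0"
    using \<open>\<not> thick_cell_const ?w\<close> unfolding thick_cell_const_def by blast
  define c where "c = rel_idx (y0, y1)"
  have c: "c \<le> d" "(y0, y1) \<in> R c" using rel_idx unfolding c_def by auto
  let ?r = "mmul (dual_idem R x (cell_of y0))
    (mmul (adj R c) (msmult (inverse (?w y1)) (dual_idem R x (cell_of y1))))"
  have "mat_vec (msmult (inverse (?w y1)) (dual_idem R x (cell_of y1))) ?w = unit_vec y1"
    using y1 thin_cell_iff[OF y1(1)]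
    by (intro ext) (simp add: mat_vec_msmult mat_vec_dual_idem_cell cell_of_le unit_vec_def)
  then have "mat_vec ?r ?w = mat_vec (dual_idem R x (cell_of y0)) (mat_vec (adj R c) (unit_vec y1))"
    by (simp add: mat_vec_mmul)
  also have "\<dots> = unit_vec y0"
    using c(2) thin_cell_iff[OF y0]
    by (intro ext) (simp add: mat_vec_unit_vec mat_vec_dual_idem_cell cell_of_le unit_vec_def[of y0] adj_def)
  finally have "mat_vec ?r ?w = unit_vec y0" .
  moreover have "?r \<in> \<T>" using c cell_of_le by (intro T_closed)
  moreover have "thick_cell_const (\<lambda>_. 0 :: 'f)"
    unfolding thick_cell_const_def cell_const_def by simp
  ultimately show "\<exists>r\<in>\<T>. thick_cell_const (\<lambda>i. mat_vec r ?w i - unit_vec y0 i)"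
    by (intro bexI[of _ ?r]) simp_all
qed

lemma cell_sum_unit_vec: "a \<le> d \<Longrightarrow> cell_sum a (unit_vec z) = (if cell_of z = a then 1 else 0)"
  unfolding cell_sum_def unit_vec_def by (simp add: mem_cell_iff)

lemma cell_sum_transport:
  assumes char2: "(2::'f::field) = 0" and a: "a \<le> d" and "linked a b"
  shows "\<exists>s\<in>\<T>. \<forall>v::'x \<Rightarrow> 'f. (\<forall>y. cell_of y \<noteq> a \<longrightarrow> mat_vec s v y = 0) \<and>
    cell_sum a (mat_vec s v) = cell_sum b v"
  using assms(3)
proof (induction rule: rtranclp_induct)
  case base
  show ?case
    using T_closed(7)[OF a] by (intro bexI) (auto simp: mat_vec_dual_idem_cell cell_sum_restrict a)
next
  case (step b e)
  then obtain s where s: "s \<in> \<T>"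
    "\<And>v::'x \<Rightarrow> 'f. (\<forall>y. cell_of y \<noteq> a \<longrightarrow> mat_vec s v y = 0) \<and> cell_sum a (mat_vec s v) = cell_sum b v"
    by blast
  from step(2) obtain c where c: "b \<le> d" "e \<le> d" "val b = 2" "val e = 2" "c \<le> d"
    "odd (succ_count c (cell_rep b) e)"
    unfolding odd_link_def by blast
  let ?s = "mmul (dual_idem R x b) (mmul (adj R c) (dual_idem R x e))"
  have odd_count: "(of_nat (pred_count c b (cell_rep e)) :: 'f) = 1"
    using succ_count_thick_eq_pred_count[OF c(1,2,5,3,4)] c(6) of_nat_char2[OF char2] by simp
  have "cell_sum b (mat_vec ?s v) = cell_sum e v" for v :: "'x \<Rightarrow> 'f"
  proof -
    have "cell_sum b (mat_vec ?s v) = cell_sum b (mat_vec (adj R c) (mat_vec (dual_idem R x e) v))"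
      by (simp add: mat_vec_mmul mat_vec_dual_idem_cell cell_sum_restrict c(1))
    also have "\<dots> = (\<Sum>b'\<le>d. of_nat (pred_count c b (cell_rep b')) * cell_sum b' (mat_vec (dual_idem R x e) v))"
      by (rule cell_sum_mat_vec_adj[OF c(1,5)])
    also have "\<dots> = (\<Sum>b'\<le>d. if b' = e then of_nat (pred_count c b (cell_rep b')) * cell_sum e v else 0)"
      by (intro sum.cong refl) (simp add: mat_vec_dual_idem_cell cell_sum_restrict c(2))
    also have "\<dots> = cell_sum e v" using c(2) odd_count by simp
    finally show ?thesis .
  qed
  then have "\<forall>v::'x \<Rightarrow> 'f. (\<forall>y. cell_of y \<noteq> a \<longrightarrow> mat_vec (mmul s ?s) v y = 0) \<and>
      cell_sum a (mat_vec (mmul s ?s) v) = cell_sum e v"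
    using s(2) by (simp add: mat_vec_mmul)
  moreover have "mmul s ?s \<in> \<T>" using s c by (intro T_closed)
  ultimately show ?case by blast
qed

lemma unit_vec_generated_mod_cell_const:
  assumes char2: "(2::'f::field) = 0"
    and w: "sums_vanish_off_linked (cell_of z0) (w :: 'x \<Rightarrow> 'f)" "\<not> cell_const w"
  shows "\<exists>r\<in>\<T>. cell_const (\<lambda>i. mat_vec r w i - unit_vec z0 i)"
proof -
  let ?b0 = "cell_of z0"
  obtain a where a: "a \<le> d" "val a = 2" "cell_sum a w \<noteq> 0"
    using w(2) cell_const_iff_thick_cell_sums[OF char2] by blast
  then have "linked ?b0 a" using w(1) unfolding sums_vanish_off_linked_def by blast
  then obtain s where s: "s \<in> \<T>"
    "\<And>v::'x \<Rightarrow> 'f. (\<forall>y. cell_of y \<noteq> ?b0 \<longrightarrow> mat_vec s v y = 0) \<and> cell_sum ?b0 (mat_vec s v) = cell_sum a v"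
    using cell_sum_transport[OF char2 cell_of_le] by blast
  let ?r = "msmult (inverse (cell_sum a w)) s"
  have "cell_sum a' (\<lambda>i. mat_vec ?r w i - unit_vec z0 i) = 0" if "a' \<le> d" for a'
  proof (cases "a' = ?b0")
    case True
    then show ?thesis
      using s(2)[of w] a(3) cell_sum_unit_vec[OF that, of z0]
      by (simp add: cell_sum_def mat_vec_msmult sum_subtractf sum_distrib_left[symmetric])
  next
    case False
    have "mat_vec s w y = 0" if "y \<in> cell a'" for y
    proof -
      have "cell_of y \<noteq> ?b0" using that False mem_cell_iff[OF \<open>a' \<le> d\<close>] by simp
      then show ?thesis using s(2)[of w] by blast
    qed
    then show ?thesis
      using False cell_sum_unit_vec[OF that, of z0]
      by (simp add: cell_sum_def mat_vec_msmult sum_subtractf sum_negf)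
  qed
  then have "cell_const (\<lambda>i. mat_vec ?r w i - unit_vec z0 i)"
    using cell_const_iff_thick_cell_sums[OF char2] by blast
  moreover have "?r \<in> \<T>" using s by (intro T_closed)
  ultimately show ?thesis by blast
qed

lemma maximal_left_ideal_thick_point:
  assumes char2: "(2::'f::field) = 0" and z0: "val (cell_of z0) = 2"
  shows "maximal_left_ideal \<T> {s \<in> \<T>. cell_const (mat_vec s (unit_vec z0 :: 'x \<Rightarrow> 'f))}"
  unfolding terwilliger_def
proof (rule maximal_left_ideal_annihilator_mod, fold terwilliger_def)
  show "vec_subspace (cell_const :: ('x \<Rightarrow> 'f) \<Rightarrow> bool)" by (rule vec_subspace_cell_const)
  show "cell_const (mat_vec s v)" if "s \<in> \<T>" "cell_const v" for s and v :: "'x \<Rightarrow> 'f"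
    using cell_const_mat_vec that by blast
  obtain z' where z': "z' \<noteq> z0" "cell (cell_of z0) = {z0, z'}" using thick_cell[OF z0] .
  then have "cell_of z' = cell_of z0" using mem_cell_iff[OF cell_of_le] by blast
  then show "\<not> cell_const (unit_vec z0 :: 'x \<Rightarrow> 'f)"
    using z'(1) unfolding cell_const_def unit_vec_def by (metis one_neq_zero)
next
  fix s :: "('x, 'f) mat" assume s: "s \<in> \<T>" and "\<not> cell_const (mat_vec s (unit_vec z0))"
  have "sums_vanish_off_linked (cell_of z0) (unit_vec z0 :: 'x \<Rightarrow> 'f)"
    unfolding sums_vanish_off_linked_def by (auto simp: cell_sum_unit_vec)
  then have "sums_vanish_off_linked (cell_of z0) (mat_vec s (unit_vec z0 :: 'x \<Rightarrow> 'f))"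
    by (rule sums_vanish_off_linked_mat_vec[OF char2 cell_of_le z0 s])
  then show "\<exists>r\<in>\<T>. cell_const (\<lambda>i. mat_vec r (mat_vec s (unit_vec z0)) i - unit_vec z0 i)"
    using unit_vec_generated_mod_cell_const[OF char2] \<open>\<not> cell_const (mat_vec s (unit_vec z0))\<close> by blast
qed

section \<open>The radical\<close>

definition J1_shaped :: "('x, 'f::field) mat \<Rightarrow> bool" where
  "J1_shaped t \<longleftrightarrow>
     (\<forall>i i' j j'. cell_of i = cell_of i' \<longrightarrow> cell_of j = cell_of j' \<longrightarrow> t i j = t i' j') \<and>
     (\<forall>i j. val (cell_of i) = 1 \<longrightarrow> val (cell_of j) = 1 \<longrightarrow> t i j = 0)"

lemma J1_shapedI:
  assumes "\<And>i i' j j'. cell_of i = cell_of i' \<Longrightarrow> cell_of j = cell_of j' \<Longrightarrow> t i j = t i' j'"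
    and "\<And>i j. val (cell_of i) = 1 \<Longrightarrow> val (cell_of j) = 1 \<Longrightarrow> t i j = 0"
  shows "J1_shaped t"
  unfolding J1_shaped_def using assms by blast

lemma J1_shapedD:
  assumes "J1_shaped t"
  shows "cell_of i = cell_of i' \<Longrightarrow> cell_of j = cell_of j' \<Longrightarrow> t i j = t i' j'"
    and "val (cell_of i) = 1 \<Longrightarrow> val (cell_of j) = 1 \<Longrightarrow> t i j = 0"
  using assms unfolding J1_shaped_def by blast+

lemma radical_J1_shaped:
  assumes char2: "(2::'f::field) = 0" and t: "t \<in> jacobson_radical (\<T> :: ('x, 'f) mat set)"
  shows "J1_shaped t"
proof -
  have in_max: "t \<in> L" if "maximal_left_ideal \<T> L" for L
    using t that unfolding jacobson_radical_def by blast
  have thin_col: "thick_cell_const (\<lambda>i. t i j)" if "val (cell_of j) = 1" for j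
    using in_max[OF maximal_left_ideal_thin_point[OF char2 that]] by (simp add: mat_vec_unit_vec)
  have col: "cell_const (\<lambda>i. t i j)" for j
  proof (cases "val (cell_of j) = 1")
    case True then show ?thesis using thin_col unfolding thick_cell_const_def by blast
  next
    case False then have "val (cell_of j) = 2" using val_cases cell_of_le by blast
    then show ?thesis
      using in_max[OF maximal_left_ideal_thick_point[OF char2]] by (simp add: mat_vec_unit_vec)
  qed
  have row: "cell_const (t i)" for i
    unfolding cell_const_iff_thick_cell_sums[OF char2]
  proof (intro allI impI)
    fix a assume a: "a \<le> d" "val a = 2"
    then have "mat_vec t (cell_ind a) = (\<lambda>_. 0 :: 'f)"
      using in_max[OF maximal_left_ideal_annihilator_cell_ind[OF char2 a]] by simp
    then show "cell_sum a (t i) = 0" using mat_vec_cell_ind[OF a(1), of t i] by simp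
  qed
  show ?thesis
  proof (rule J1_shapedI)
    fix i i' j j' assume "cell_of i = cell_of i'" "cell_of j = cell_of j'"
    then show "t i j = t i' j'" using col[of j] row[of i'] unfolding cell_const_def by metis
  next
    fix i j assume "val (cell_of i) = 1" "val (cell_of j) = 1"
    then show "t i j = 0" using thin_col unfolding thick_cell_const_def by blast
  qed
qed

definition thick_pairs :: "(nat \<times> nat) set" where
  "thick_pairs = {(a, b). a \<le> d \<and> b \<le> d \<and> max (val a) (val b) = 2}"

definition block_mat :: "nat \<times> nat \<Rightarrow> ('x, 'f::field) mat" where
  "block_mat p = mmul (mmul (dual_idem R x (fst p)) all_ones) (dual_idem R x (snd p))"

lemma mmul_dual_idem_right:
  "mmul A (dual_idem R z b) i j = (if (z, j) \<in> R b then A i j else (0::'f::field))"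
proof -
  have "mmul A (dual_idem R z b) i j = (\<Sum>k\<in>UNIV. if k = j then (if (z, j) \<in> R b then A i k else 0) else 0)"
    unfolding mmul_def dual_idem_def by (intro sum.cong) auto
  then show ?thesis by simp
qed

lemma block_mat_apply:
  assumes "a \<le> d" "b \<le> d"
  shows "block_mat (a, b) i j = (if cell_of i = a \<and> cell_of j = b then 1 else (0::'f::field))"
proof -
  have left: "mmul (dual_idem R x a) all_ones i j = (if cell_of i = a then 1 else (0::'f))"
    using assms(1) by (simp add: mmul_eq_mat_vec_col mat_vec_dual_idem_cell all_ones_def)
  show ?thesis
    unfolding block_mat_def fst_conv snd_conv mmul_dual_idem_right left
    using assms(2) by (simp add: in_R_x_iff)
qed

lemma finite_thick_pairs: "finite thick_pairs"
  by (rule finite_subset[of _ "{..d} \<times> {..d}"]) (auto simp: thick_pairs_def)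

lemma inj_on_block_mat: "inj_on (block_mat :: nat \<times> nat \<Rightarrow> ('x, 'f::field) mat) thick_pairs"
proof (rule inj_onI)
  fix p p' assume p: "p \<in> thick_pairs" "p' \<in> thick_pairs" and eq: "block_mat p = (block_mat p' :: ('x, 'f) mat)"
  obtain a b a' b' where ab: "p = (a, b)" "p' = (a', b')" "a \<le> d" "b \<le> d" "a' \<le> d" "b' \<le> d"
    using p unfolding thick_pairs_def by auto
  have "(block_mat p (cell_rep a) (cell_rep b) :: 'f) = 1"
    using ab by (simp add: block_mat_apply cell_rep(2))
  then have "(block_mat p' (cell_rep a) (cell_rep b) :: 'f) = 1"
    unfolding eq .
  then show "p = p'" using ab by (auto simp: block_mat_apply cell_rep(2) split: if_splits)
qed

lemma J1_shaped_eq_block_sum: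
  assumes "J1_shaped (t :: ('x, 'f::field) mat)"
  shows "t = (\<lambda>i j. \<Sum>p\<in>thick_pairs. t (cell_rep (fst p)) (cell_rep (snd p)) * block_mat p i j)"
proof (intro ext)
  fix i j
  have "(\<Sum>p\<in>thick_pairs. t (cell_rep (fst p)) (cell_rep (snd p)) * block_mat p i j) =
      (\<Sum>p\<in>thick_pairs. if p = (cell_of i, cell_of j) then t (cell_rep (fst p)) (cell_rep (snd p)) else 0)"
    by (intro sum.cong refl) (auto simp: thick_pairs_def block_mat_apply split: if_splits)
  also have "\<dots> = (if (cell_of i, cell_of j) \<in> thick_pairs then t (cell_rep (cell_of i)) (cell_rep (cell_of j)) else 0)"
    using finite_thick_pairs by (simp add: sum.delta)
  also have "\<dots> = t i j"
  proof (cases "(cell_of i, cell_of j) \<in> thick_pairs")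
    case True
    have "t (cell_rep (cell_of i)) (cell_rep (cell_of j)) = t i j"
      by (rule J1_shapedD(1)[OF assms]) (simp_all add: cell_rep(2) cell_of_le)
    then show ?thesis using True by simp
  next
    case False
    then have "val (cell_of i) = 1" "val (cell_of j) = 1"
      using val_cases[OF cell_of_le, of i] val_cases[OF cell_of_le, of j] cell_of_le
      unfolding thick_pairs_def by (auto simp: max_def split: if_splits)
    then show ?thesis using False J1_shapedD(2)[OF assms] by simp
  qed
  finally show "t i j = (\<Sum>p\<in>thick_pairs. t (cell_rep (fst p)) (cell_rep (snd p)) * block_mat p i j)"
    by simp
qed

lemma J1_shaped_in_mspan:
  assumes "J1_shaped (t :: ('x, 'f::field) mat)"
  shows "t \<in> mspan (block_mat ` thick_pairs)"
proof -
  define c :: "('x, 'f) mat \<Rightarrow> 'f" where "c M = t (cell_rep (fst (inv_into thick_pairs block_mat M)))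
    (cell_rep (snd (inv_into thick_pairs block_mat M)))" for M
  have "(\<lambda>i j. \<Sum>M\<in>block_mat ` thick_pairs. c M * M i j) =
      (\<lambda>i j. \<Sum>p\<in>thick_pairs. t (cell_rep (fst p)) (cell_rep (snd p)) * block_mat p i j)"
    by (intro ext) (simp add: sum.reindex[OF inj_on_block_mat] c_def inv_into_f_f[OF inj_on_block_mat]
        cong: sum.cong)
  then have "t = (\<lambda>i j. \<Sum>M\<in>block_mat ` thick_pairs. c M * M i j)"
    using J1_shaped_eq_block_sum[OF assms] by simp
  then show ?thesis
    unfolding mspan_def using finite_thick_pairs by blast
qed

lemma all_ones_in_T: "all_ones \<in> (\<T> :: ('x, 'f::field) mat set)"
proof -
  have partial_sums: "(\<lambda>i j. \<Sum>c\<le>n. adj R c i j) \<in> (\<T> :: ('x, 'f) mat set)" if "n \<le> d" for n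
    using that
  proof (induction n)
    case 0 then show ?case using T_closed(6)[of 0] by simp
  next
    case (Suc n)
    have "(\<lambda>i j. \<Sum>c\<le>Suc n. adj R c i j) = madd (\<lambda>i j. \<Sum>c\<le>n. adj R c i j) (adj R (Suc n) :: ('x, 'f) mat)"
      by (simp add: madd_def)
    moreover have "(\<lambda>i j. \<Sum>c\<le>n. adj R c i j) \<in> (\<T> :: ('x, 'f) mat set)"
      using Suc.prems by (intro Suc.IH) simp
    moreover have "adj R (Suc n) \<in> (\<T> :: ('x, 'f) mat set)" using Suc.prems by (rule T_closed(6))
    ultimately show ?case by (simp only:) (rule T_closed(3))
  qed
  have "(\<Sum>c\<le>d. adj R c i j :: 'f) = 1" for i j
  proof -
    have "(\<Sum>c\<le>d. adj R c i j :: 'f) = (\<Sum>c\<le>d. if c = rel_idx (i, j) then 1 else 0)"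
    proof (intro sum.cong refl)
      fix c assume "c \<in> {..d}"
      then have "(i, j) \<in> R c \<longleftrightarrow> c = rel_idx (i, j)" using rel_idx rel_idx_eq by blast
      then show "(adj R c i j :: 'f) = (if c = rel_idx (i, j) then 1 else 0)" unfolding adj_def by simp
    qed
    then show ?thesis using rel_idx(1) by simp
  qed
  then have "all_ones = (\<lambda>i j. \<Sum>c\<le>d. adj R c i j :: 'f)"
    unfolding all_ones_def by simp
  then show ?thesis using partial_sums[OF order_refl] by simp
qed

lemma block_mats_subset_T: "block_mat ` thick_pairs \<subseteq> (\<T> :: ('x, 'f::field) mat set)"
proof -
  have "block_mat (a, b) \<in> (\<T> :: ('x, 'f) mat set)" if "a \<le> d" "b \<le> d" for a b
    unfolding block_mat_def fst_conv snd_conv using that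
    by (intro T_closed(5)[OF T_closed(5)] T_closed(7) all_ones_in_T)
  then show ?thesis unfolding thick_pairs_def by auto
qed

lemma J1_shaped_mzero: "J1_shaped mzero"
  unfolding J1_shaped_def mzero_def by simp

lemma J1_shaped_madd:
  assumes "J1_shaped A" "J1_shaped B"
  shows "J1_shaped (madd A B)"
proof (rule J1_shapedI)
  fix i i' j j' assume "cell_of i = cell_of i'" "cell_of j = cell_of j'"
  then show "madd A B i j = madd A B i' j'"
    using J1_shapedD(1)[OF assms(1)] J1_shapedD(1)[OF assms(2)] unfolding madd_def by metis
next
  fix i j assume "val (cell_of i) = 1" "val (cell_of j) = 1"
  then show "madd A B i j = 0"
    using J1_shapedD(2)[OF assms(1)] J1_shapedD(2)[OF assms(2)] unfolding madd_def by simp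
qed

lemma J1_shaped_msmult:
  assumes "J1_shaped A"
  shows "J1_shaped (msmult c A)"
proof (rule J1_shapedI)
  fix i i' j j' assume "cell_of i = cell_of i'" "cell_of j = cell_of j'"
  then show "msmult c A i j = msmult c A i' j'"
    using J1_shapedD(1)[OF assms] unfolding msmult_def by metis
next
  fix i j assume "val (cell_of i) = 1" "val (cell_of j) = 1"
  then show "msmult c A i j = 0"
    using J1_shapedD(2)[OF assms] unfolding msmult_def by simp
qed

lemma mspan_block_mats_J1_shaped: "mspan (block_mat ` thick_pairs) \<subseteq> {t :: ('x, 'f::field) mat. J1_shaped t}"
proof (rule mspan_subset)
  show "block_mat ` thick_pairs \<subseteq> {t :: ('x, 'f) mat. J1_shaped t}"
    unfolding thick_pairs_def
    by (auto simp: block_mat_apply max_def split: if_splits intro!: J1_shapedI)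
qed (auto intro: J1_shaped_mzero J1_shaped_madd J1_shaped_msmult)

lemma J1_shaped_mmul_dual_idem:
  assumes "a \<le> d" "J1_shaped (u :: ('x, 'f::field) mat)"
  shows "J1_shaped (mmul (dual_idem R x a) u)"
proof -
  have restrict: "mmul (dual_idem R x a) u i j = (if cell_of i = a then u i j else 0)" for i j
    using assms(1) by (simp add: mmul_eq_mat_vec_col mat_vec_dual_idem_cell)
  show ?thesis
  proof (rule J1_shapedI)
    fix i i' j j' assume ij: "cell_of i = cell_of i'" "cell_of j = cell_of j'"
    then show "mmul (dual_idem R x a) u i j = mmul (dual_idem R x a) u i' j'"
      unfolding restrict using J1_shapedD(1)[OF assms(2) ij] by simp
  next
    fix i j assume "val (cell_of i) = 1" "val (cell_of j) = 1"
    then show "mmul (dual_idem R x a) u i j = 0"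
      unfolding restrict using J1_shapedD(2)[OF assms(2), of i j] by simp
  qed
qed

lemma J1_shaped_mmul_adj:
  assumes char2: "(2::'f::field) = 0" and c: "c \<le> d" and u: "J1_shaped (u :: ('x, 'f) mat)"
  shows "J1_shaped (mmul (adj R c) u)"
proof -
  have col: "cell_const (\<lambda>k. u k j)" for j
    unfolding cell_const_def using J1_shapedD(1)[OF u] by blast
  have prod: "mmul (adj R c) u i j = (\<Sum>b\<le>d. of_nat (succ_count c i b) * u (cell_rep b) j)" for i j
    by (simp add: mmul_eq_mat_vec_col mat_vec_adj_cell_const[OF col])
  show ?thesis
  proof (rule J1_shapedI)
    fix i i' j j' assume ij: "cell_of i = cell_of i'" "cell_of j = cell_of j'"
    have "succ_count c i b = succ_count c i' b" if "b \<le> d" for b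
      using that c ij(1) by (rule succ_count_cong)
    moreover have "u (cell_rep b) j = u (cell_rep b) j'" for b
      using J1_shapedD(1)[OF u refl ij(2)] .
    ultimately show "mmul (adj R c) u i j = mmul (adj R c) u i' j'"
      unfolding prod by (intro sum.cong refl) auto
  next
    fix i j assume thin: "val (cell_of i) = 1" "val (cell_of j) = 1"
    show "mmul (adj R c) u i j = 0"
      unfolding mmul_eq_mat_vec_col
    proof (rule mat_vec_adj_eq_0[OF char2 col])
      fix b assume b: "b \<le> d"
      show "u (cell_rep b) j = 0 \<or> even (succ_count c i b)"
        using val_cases[OF b] J1_shapedD(2)[OF u _ thin(2)] even_succ_count_thin_thick[OF b c thin(1)]
          cell_rep(2)[OF b] by auto
    qed
  qed
qed

lemma J1_shaped_mmul_left:
  assumes char2: "(2::'f::field) = 0" and "s \<in> \<T>" "J1_shaped (q :: ('x, 'f) mat)"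
  shows "J1_shaped (mmul s q)"
  using assms(2,3) unfolding terwilliger_def
proof (rule gen_alg_mmul_invariant[where P = J1_shaped])
  fix g u :: "('x, 'f) mat"
  assume "g \<in> {adj R a |a. a \<le> d} \<union> {dual_idem R x a |a. a \<le> d}" and "J1_shaped u"
  then show "J1_shaped (mmul g u)"
    using J1_shaped_mmul_adj[OF char2] J1_shaped_mmul_dual_idem by blast
qed (auto intro: J1_shaped_mzero J1_shaped_madd J1_shaped_msmult)

text \<open>In characteristic 2 a product through a thick cell picks up the factor \<open>|xR\<^sub>b| = 2 = 0\<close>.\<close>

lemma mmul_eq_0_if_thin_terms_vanish:
  assumes char2: "(2::'f::field) = 0" and const: "cell_const (\<lambda>k. p i k * q k j :: 'f)"
    and thin: "\<And>b. b \<le> d \<Longrightarrow> val b = 1 \<Longrightarrow> p i (cell_rep b) * q (cell_rep b) j = 0"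
  shows "mmul p q i j = 0"
proof -
  have "mmul p q i j = (\<Sum>b\<le>d. of_nat (val b) * (p i (cell_rep b) * q (cell_rep b) j))"
    unfolding mmul_def sum_UNIV_cells using sum_cell_const[OF _ const] by simp
  also have "\<dots> = 0"
    using val_cases thin char2 by (intro sum.neutral) fastforce
  finally show ?thesis .
qed

lemma J1_shaped_cube_zero:
  assumes char2: "(2::'f::field) = 0" and q: "J1_shaped (q :: ('x, 'f) mat)"
  shows "mmul (mmul q q) q = mzero"
proof (intro ext)
  fix i j
  have q_const: "q l k = q l k'" "q k l = q k' l" if "cell_of k = cell_of k'" for k k' l
    using J1_shapedD(1)[OF q refl that] J1_shapedD(1)[OF q that refl] .
  have qq_thin: "mmul q q i' j' = 0" if "val (cell_of j') = 1" for i' j'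
  proof (rule mmul_eq_0_if_thin_terms_vanish[OF char2])
    show "cell_const (\<lambda>k. q i' k * q k j')"
      unfolding cell_const_def using q_const by metis
    show "q i' (cell_rep b) * q (cell_rep b) j' = 0" if "b \<le> d" "val b = 1" for b
      using J1_shapedD(2)[OF q _ \<open>val (cell_of j') = 1\<close>, of "cell_rep b"] that cell_rep(2) by simp
  qed
  have "mmul (mmul q q) q i j = 0"
  proof (rule mmul_eq_0_if_thin_terms_vanish[OF char2])
    have "mmul q q i k = mmul q q i k'" if "cell_of k = cell_of k'" for k k'
      unfolding mmul_def using q_const(1)[OF that] by simp
    then show "cell_const (\<lambda>k. mmul q q i k * q k j)"
      unfolding cell_const_def using q_const by metis
    show "mmul q q i (cell_rep b) * q (cell_rep b) j = 0" if "b \<le> d" "val b = 1" for b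
      using qq_thin that cell_rep(2) by simp
  qed
  then show "mmul (mmul q q) q i j = mzero i j" by (simp add: mzero_def)
qed

lemma J1_shaped_in_radical:
  assumes char2: "(2::'f::field) = 0" and "t \<in> \<T>" "J1_shaped (t :: ('x, 'f) mat)"
  shows "t \<in> jacobson_radical \<T>"
  using assms(2) unfolding terwilliger_def
proof (rule jacobson_radical_if_left_quasi_regular, fold terwilliger_def)
  fix s :: "('x, 'f) mat" assume s: "s \<in> \<T>"
  let ?q = "mmul s t"
  have "mmul (mmul ?q ?q) ?q = mzero"
    by (rule J1_shaped_cube_zero[OF char2 J1_shaped_mmul_left[OF char2 s assms(3)]])
  moreover have "madd mone (madd ?q (mmul ?q ?q)) \<in> \<T>"
    using s assms(2) by (intro T_closed)
  ultimately show "\<exists>w\<in>\<T>. mmul w (madd mone (msmult (-1) ?q)) = mone"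
    using left_inverse_if_cube_zero by blast
qed

end

theorem theoremC:
  fixes R :: "nat \<Rightarrow> ('x::finite \<times> 'x) set" and d :: nat and x :: 'x
  assumes "CHAR('f::field) = 2"
    and "is_scheme R d"
    and "quasi_thin R d"
  shows "jacobson_radical (terwilliger R d x :: ('x, 'f) mat set) =
    mspan {mmul (mmul (dual_idem R x a) all_ones) (dual_idem R x b) | a b.
             a \<le> d \<and> b \<le> d \<and> max (valency R d a) (valency R d b) = 2}"
proof -
  interpret quasi_thin_scheme R d x
    using assms(2,3) by unfold_locales
  have char2: "(2::'f) = 0"
    using of_nat_CHAR[where 'a = 'f] assms(1) by simp
  have gens: "{mmul (mmul (dual_idem R x a) all_ones) (dual_idem R x b) | a b.
      a \<le> d \<and> b \<le> d \<and> max (valency R d a) (valency R d b) = 2} = block_mat ` thick_pairs"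
    unfolding block_mat_def thick_pairs_def using valency_eq_val by force
  have "jacobson_radical \<T> \<subseteq> mspan (block_mat ` thick_pairs :: ('x, 'f) mat set)"
    using radical_J1_shaped[OF char2] J1_shaped_in_mspan by blast
  moreover have "mspan (block_mat ` thick_pairs) \<subseteq> jacobson_radical (\<T> :: ('x, 'f) mat set)"
  proof
    fix t :: "('x, 'f) mat" assume "t \<in> mspan (block_mat ` thick_pairs)"
    moreover have "mspan (block_mat ` thick_pairs) \<subseteq> (\<T> :: ('x, 'f) mat set)"
      using block_mats_subset_T by (intro mspan_subset) (auto intro: T_closed)
    ultimately show "t \<in> jacobson_radical \<T>"
      using J1_shaped_in_radical[OF char2] mspan_block_mats_J1_shaped by blast
  qed
  ultimately show ?thesis unfolding gens by blast
qed

end
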